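(* $\operatorname{BWT}_2\times\lim\le_{\mathrm{sW}}\operatorname{Proj}^-_\mathbb{R}$.
   Context: Represented spaces: a representation of a set $X$ is a partial surjection $\delta_X:\subseteq\mathbb{N}^\mathbb{N}\to X$. For a partial multi-valued function $f:\subseteq X\rightrightarrows Y$, a realizer is a partial $F:\subseteq\mathbb{N}^\mathbb{N}\to\mathbb{N}^\mathbb{N}$ with $\delta_Y(F(p))\in f(\delta_X(p))$ for all $p$ with $\delta_X(p)\in\mathrm{dom}(f)$. Strong Weihrauch reducibility $f\le_{\mathrm{sW}}g$: there are computable partial $H,K:\subseteq\mathbb{N}^\mathbb{N}\to\mathbb{N}^\mathbb{N}$ with $H\circ G\circ K$ a realizer of $f$ for every realizer $G$ of $g$. For multi-valued $f,g$, the product $f\times g$ maps $(x,y)\in\mathrm{dom}(f)\times\mathrm{dom}(g)$ to $f(x)\times g(y)$. $\operatorname{BWT}_2:\{0,1\}^\mathbb{N}\rightrightarrows\{0,1\}$ maps a binary sequence to the set of values occurring in it infinitely often. $\lim:\subseteq(\mathbb{N}^\mathbb{N})^\mathbb{N}\to\mathbb{N}^\mathbb{N}$ maps a convergent sequence in Baire space to its limit. $\mathbb{R}$ has the Cauchy representation. $\mathcal{A}_-(\mathbb{R})$: closed subsets of $\mathbb{R}$, a name of $A$ being an enumeration of rational open intervals whose union is $\mathbb{R}\setminus A$. $\operatorname{Proj}^-_\mathbb{R}:\subseteq\mathbb{R}\times\mathcal{A}_-(\mathbb{R})\rightrightarrows\mathbb{R}$ maps $(x,A)$ with $A$ nonempty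 closed to the set of $y\in A$ with $|x-y|=d(x,A)$. *)

theory Defs
  imports "HOL-Analysis.Analysis" "HOL-Library.Nat_Bijection"
begin

datatype recf =
    Zr | Sc | Fst | Snd | Ident
  | Comp recf recf      \<comment> \<open>Comp f g = f o g\<close>
  | Pairf recf recf
  | Prec recf recf
  | Mu recf

inductive evalr :: "recf \<Rightarrow> nat \<Rightarrow> nat \<Rightarrow> bool" where
  "evalr Zr x 0"
| "evalr Sc x (Suc x)"
| "evalr Fst x (fst (prod_decode x))"
| "evalr Snd x (snd (prod_decode x))"
| "evalr Ident x x"
| "evalr g x y \<Longrightarrow> evalr f y z \<Longrightarrow> evalr (Comp f g) x z"
| "evalr f x y \<Longrightarrow> evalr g x z \<Longrightarrow> evalr (Pairf f g) x (prod_encode (y, z))"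
| "evalr f x y \<Longrightarrow> evalr (Prec f g) (prod_encode (x, 0)) y"
| "evalr (Prec f g) (prod_encode (x, n)) y \<Longrightarrow> evalr g (prod_encode (x, prod_encode (n, y))) z
     \<Longrightarrow> evalr (Prec f g) (prod_encode (x, Suc n)) z"
| "evalr f (prod_encode (x, n)) 0 \<Longrightarrow> (\<forall>m<n. \<exists>y. evalr f (prod_encode (x, m)) (Suc y))
     \<Longrightarrow> evalr (Mu f) x n"

type_synonym baire = "nat \<Rightarrow> nat"
type_synonym 'a rep = "baire \<Rightarrow> 'a option"

text \<open>A partial F on Baire space is computable iff some partial recursive function, queried
  with output index n and ever longer input prefixes, answers 0 ("need more input") until it
  answers Suc (F(p)(n)). Behaviour outside dom F is irrelevant.\<close>
definition computable :: "(baire \<Rightarrow> baire option) \<Rightarrow> bool" where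
  "computable F \<longleftrightarrow> (\<exists>c. \<forall>p q. F p = Some q \<longrightarrow>
     (\<forall>n. \<exists>k. evalr c (prod_encode (n, list_encode (map p [0..<k]))) (Suc (q n)) \<and>
               (\<forall>k'<k. evalr c (prod_encode (n, list_encode (map p [0..<k']))) 0)))"

text \<open>Multi-valued problems: f :: 'a => 'b set, with dom f = {x. f x \<noteq> {}}.\<close>
definition realizes :: "'a rep \<Rightarrow> 'b rep \<Rightarrow> ('a \<Rightarrow> 'b set) \<Rightarrow> (baire \<Rightarrow> baire option) \<Rightarrow> bool" where
  "realizes dX dY f F \<longleftrightarrow> (\<forall>p x. dX p = Some x \<and> f x \<noteq> {} \<longrightarrow>
      (\<exists>q y. F p = Some q \<and> dY q = Some y \<and> y \<in> f x))"

definition sW_reducible ::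
  "'a rep \<Rightarrow> 'b rep \<Rightarrow> ('a \<Rightarrow> 'b set) \<Rightarrow> 'c rep \<Rightarrow> 'd rep \<Rightarrow> ('c \<Rightarrow> 'd set) \<Rightarrow> bool" where
  "sW_reducible dX dY f dU dV g \<longleftrightarrow> (\<exists>H K. computable H \<and> computable K \<and>
     (\<forall>G. realizes dU dV g G \<longrightarrow>
        realizes dX dY f (\<lambda>p. Option.bind (K p) (\<lambda>r. Option.bind (G r) H))))"

definition rep_prod :: "'a rep \<Rightarrow> 'b rep \<Rightarrow> ('a \<times> 'b) rep" where
  "rep_prod d1 d2 r = (case (d1 (\<lambda>n. r (2*n)), d2 (\<lambda>n. r (2*n+1))) of
      (Some a, Some b) \<Rightarrow> Some (a, b) | _ \<Rightarrow> None)"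

definition prob_prod :: "('a \<Rightarrow> 'b set) \<Rightarrow> ('c \<Rightarrow> 'd set) \<Rightarrow> ('a \<times> 'c \<Rightarrow> ('b \<times> 'd) set)" where
  "prob_prod f g = (\<lambda>(x, y). f x \<times> g y)"

definition rep_baire :: "baire rep" where
  "rep_baire p = Some p"

definition rep_cantor :: "(nat \<Rightarrow> bool) rep" where
  "rep_cantor p = (if \<forall>n. p n \<le> 1 then Some (\<lambda>n. p n = 1) else None)"

definition rep_bool :: "bool rep" where
  "rep_bool p = (if p 0 \<le> 1 then Some (p 0 = 1) else None)"

definition rep_baire_seq :: "(nat \<Rightarrow> baire) rep" where
  "rep_baire_seq p = Some (\<lambda>i j. p (prod_encode (i, j)))"

definition nuQ :: "nat \<Rightarrow> real" where
  "nuQ n = (case prod_decode n of (a, b) \<Rightarrow> real_of_int (int_decode a) / real (Suc b))"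

definition delta_real :: "real rep" where
  "delta_real p = (if \<exists>x. \<forall>i. \<bar>nuQ (p i) - x\<bar> \<le> (1/2) ^ i
                 then Some (THE x. \<forall>i. \<bar>nuQ (p i) - x\<bar> \<le> (1/2) ^ i) else None)"

text \<open>Negative information on closed sets: p enumerates rational open intervals
  (nuQ a, nuQ b), (a,b) = prod_decode (p n) (empty intervals allowed), whose union is the
  complement.\<close>
definition rep_closed_neg :: "real set rep" where
  "rep_closed_neg p = Some (- (\<Union>n. case prod_decode (p n) of (a, b) \<Rightarrow> {nuQ a <..< nuQ b}))"

definition BWT2 :: "(nat \<Rightarrow> bool) \<Rightarrow> bool set" where
  "BWT2 x = {b. infinite {n. x n = b}}"

definition lim_baire :: "(nat \<Rightarrow> baire) \<Rightarrow> baire set" where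
  "lim_baire xs = {L. xs \<longlonglongrightarrow> L}"

definition ProjR :: "real \<times> real set \<Rightarrow> real set" where
  "ProjR = (\<lambda>(x, A). if closed A \<and> A \<noteq> {} then {y \<in> A. \<bar>x - y\<bar> = infdist x A} else {})"

end

theory Submission
  imports Defs
begin

text \<open>A sequence t in Baire space is sent to the real E t in [1/3, 2/3] whose base-4 digits
  form the word 2^(t 0) 1 2^(t 1) 1 ... This embedding is strictly monotone for the
  lexicographic order, and finitely many digits of t can be recovered from a good rational
  approximation of its value.

  For a bit sequence x and a sequence of points of Baire space converging to L, let s_b
  interleave, for every k, the flag "b occurs more than k times in x", the number of changes
  of the first k+1 coordinates of the sequence so far, and L k. The finite-stage versions of
  s_b can only grow lexicographically towards s_b, so the embeddings of s_b are computable
  from below and the complement of the interval (-(1 + E s_1), 1 + E s_0) is available as a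
  closed set. Projecting 0 onto it picks the endpoint nearest to 0, that is, the smaller of
  E s_0 and E s_1. A bit that occurs only finitely often has the lexicographically smaller
  s_b, so the sign of the projection is a cluster point of x, while its absolute value
  1 + E s_b yields the digits of s_b and hence L.\<close>


section \<open>Recursive functions\<close>

definition recursive_fun :: "(nat \<Rightarrow> nat) \<Rightarrow> bool" where
  "recursive_fun f \<longleftrightarrow> (\<exists>c. \<forall>x. evalr c x (f x))"

definition recursive_pred :: "(nat \<Rightarrow> bool) \<Rightarrow> bool" where
  "recursive_pred P \<longleftrightarrow> recursive_fun (\<lambda>x. if P x then 1 else 0)"

abbreviation pfst :: "nat \<Rightarrow> nat" where "pfst w \<equiv> fst (prod_decode w)"
abbreviation psnd :: "nat \<Rightarrow> nat" where "psnd w \<equiv> snd (prod_decode w)"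

lemma recursive_fun_zero: "recursive_fun (\<lambda>x. 0)"
  unfolding recursive_fun_def by (rule exI[of _ Zr]) (auto intro: evalr.intros)

lemma recursive_fun_id: "recursive_fun (\<lambda>x. x)"
  unfolding recursive_fun_def by (rule exI[of _ Ident]) (auto intro: evalr.intros)

lemma recursive_fun_Suc: "recursive_fun f \<Longrightarrow> recursive_fun (\<lambda>x. Suc (f x))"
  unfolding recursive_fun_def by (metis evalr.intros(2,6))

lemma recursive_fun_pfst: "recursive_fun f \<Longrightarrow> recursive_fun (\<lambda>x. pfst (f x))"
  unfolding recursive_fun_def by (metis evalr.intros(3,6))

lemma recursive_fun_psnd: "recursive_fun f \<Longrightarrow> recursive_fun (\<lambda>x. psnd (f x))"
  unfolding recursive_fun_def by (metis evalr.intros(4,6))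

lemmas recursive_proj = recursive_fun_id recursive_fun_pfst recursive_fun_psnd

lemma recursive_fun_comp: "recursive_fun f \<Longrightarrow> recursive_fun g \<Longrightarrow> recursive_fun (\<lambda>x. f (g x))"
  unfolding recursive_fun_def by (metis evalr.intros(6))

lemma recursive_fun_prod_encode:
  "recursive_fun f \<Longrightarrow> recursive_fun g \<Longrightarrow> recursive_fun (\<lambda>x. prod_encode (f x, g x))"
  unfolding recursive_fun_def by (metis evalr.intros(7))

lemma recursive_fun_comp2:
  assumes "recursive_fun (\<lambda>w. g (pfst w) (psnd w))" "recursive_fun a" "recursive_fun b"
  shows "recursive_fun (\<lambda>x. g (a x) (b x))"
  using recursive_fun_comp[OF assms(1) recursive_fun_prod_encode[OF assms(2,3)]] by simp

lemma recursive_fun_const: "recursive_fun (\<lambda>x. c)"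
  by (induction c) (auto intro: recursive_fun_zero recursive_fun_Suc)

primrec natrec :: "(nat \<Rightarrow> nat) \<Rightarrow> (nat \<Rightarrow> nat \<Rightarrow> nat \<Rightarrow> nat) \<Rightarrow> nat \<Rightarrow> nat \<Rightarrow> nat" where
  "natrec a s x 0 = a x"
| "natrec a s x (Suc n) = s x n (natrec a s x n)"

lemma recursive_fun_natrec:
  assumes a: "recursive_fun a"
    and s: "recursive_fun (\<lambda>w. s (pfst w) (pfst (psnd w)) (psnd (psnd w)))"
    and m: "recursive_fun m"
  shows "recursive_fun (\<lambda>x. natrec a s x (m x))"
proof -
  obtain ca where ca: "\<And>x. evalr ca x (a x)" using a unfolding recursive_fun_def by blast
  obtain cs where cs: "\<And>w. evalr cs w (s (pfst w) (pfst (psnd w)) (psnd (psnd w)))"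
    using s unfolding recursive_fun_def by blast
  have "evalr (Prec ca cs) (prod_encode (x, n)) (natrec a s x n)" for x n
  proof (induction n)
    case 0
    then show ?case using ca by (auto intro: evalr.intros)
  next
    case (Suc n)
    have "evalr cs (prod_encode (x, prod_encode (n, natrec a s x n))) (natrec a s x (Suc n))"
      using cs[of "prod_encode (x, prod_encode (n, natrec a s x n))"] by simp
    then show ?case using Suc by (auto intro: evalr.intros)
  qed
  then have "recursive_fun (\<lambda>w. natrec a s (pfst w) (psnd w))"
    unfolding recursive_fun_def by (metis prod.collapse prod_decode_inverse)
  from recursive_fun_comp2[OF this recursive_fun_id m] show ?thesis .
qed

lemma recursive_fun_add: "recursive_fun f \<Longrightarrow> recursive_fun g \<Longrightarrow> recursive_fun (\<lambda>x. f x + g x)"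
proof -
  assume f: "recursive_fun f" and g: "recursive_fun g"
  have "natrec f (\<lambda>x n acc. Suc acc) x n = f x + n" for x n by (induction n) auto
  moreover have "recursive_fun (\<lambda>x. natrec f (\<lambda>x n acc. Suc acc) x (g x))"
    by (rule recursive_fun_natrec[OF f _ g]) (simp add: recursive_fun_Suc recursive_proj)
  ultimately show ?thesis by simp
qed

lemma recursive_fun_mult: "recursive_fun f \<Longrightarrow> recursive_fun g \<Longrightarrow> recursive_fun (\<lambda>x. f x * g x)"
proof -
  assume f: "recursive_fun f" and g: "recursive_fun g"
  have "natrec (\<lambda>x. 0) (\<lambda>x n acc. acc + f x) x n = f x * n" for x n by (induction n) auto
  moreover have "recursive_fun (\<lambda>x. natrec (\<lambda>x. 0) (\<lambda>x n acc. acc + f x) x (g x))"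
    by (rule recursive_fun_natrec[OF recursive_fun_const _ g])
      (simp add: recursive_fun_add recursive_fun_comp[OF f] recursive_proj)
  ultimately show ?thesis by (simp add: mult.commute)
qed

lemma recursive_fun_pred: "recursive_fun f \<Longrightarrow> recursive_fun (\<lambda>x. f x - 1)"
proof -
  assume f: "recursive_fun f"
  have "natrec (\<lambda>x. 0) (\<lambda>x n acc. n) x n = n - 1" for x n by (induction n) auto
  moreover have "recursive_fun (\<lambda>x. natrec (\<lambda>x. 0) (\<lambda>x n acc. n) x (f x))"
    by (rule recursive_fun_natrec[OF recursive_fun_const _ f])
      (simp add: recursive_proj)
  ultimately show ?thesis by simp
qed

lemma recursive_fun_diff: "recursive_fun f \<Longrightarrow> recursive_fun g \<Longrightarrow> recursive_fun (\<lambda>x. f x - g x)"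
proof -
  assume f: "recursive_fun f" and g: "recursive_fun g"
  have "natrec f (\<lambda>x n acc. acc - 1) x n = f x - n" for x n by (induction n) auto
  moreover have "recursive_fun (\<lambda>x. natrec f (\<lambda>x n acc. acc - 1) x (g x))"
    by (rule recursive_fun_natrec[OF f _ g])
      (rule recursive_fun_pred, intro recursive_proj)
  ultimately show ?thesis by simp
qed

lemma recursive_fun_power: "recursive_fun f \<Longrightarrow> recursive_fun g \<Longrightarrow> recursive_fun (\<lambda>x. f x ^ g x)"
proof -
  assume f: "recursive_fun f" and g: "recursive_fun g"
  have "natrec (\<lambda>x. 1) (\<lambda>x n acc. acc * f x) x n = f x ^ n" for x n by (induction n) auto
  moreover have "recursive_fun (\<lambda>x. natrec (\<lambda>x. 1) (\<lambda>x n acc. acc * f x) x (g x))"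
    by (rule recursive_fun_natrec[OF recursive_fun_const _ g])
      (simp add: recursive_fun_mult recursive_fun_comp[OF f] recursive_proj)
  ultimately show ?thesis by simp
qed

lemma recursive_fun_sum:
  assumes g: "recursive_fun (\<lambda>w. g (pfst w) (psnd w))" and m: "recursive_fun m"
  shows "recursive_fun (\<lambda>x. \<Sum>j<m x. g x j)"
proof -
  have "natrec (\<lambda>x. 0) (\<lambda>x n acc. acc + g x n) x n = (\<Sum>j<n. g x j)" for x n
    by (induction n) auto
  moreover have "recursive_fun (\<lambda>x. natrec (\<lambda>x. 0) (\<lambda>x n acc. acc + g x n) x (m x))"
    by (rule recursive_fun_natrec[OF recursive_fun_const _ m])
      (simp add: recursive_fun_add recursive_fun_comp2[OF g] recursive_proj)
  ultimately show ?thesis by simp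
qed

lemma recursive_fun_funpow:
  assumes s: "recursive_fun s" and f: "recursive_fun f" and g: "recursive_fun g"
  shows "recursive_fun (\<lambda>x. (s ^^ g x) (f x))"
proof -
  have "natrec f (\<lambda>x n acc. s acc) x n = (s ^^ n) (f x)" for x n
    by (induction n) auto
  moreover have "recursive_fun (\<lambda>x. natrec f (\<lambda>x n acc. s acc) x (g x))"
    by (rule recursive_fun_natrec[OF f _ g]) (simp add: recursive_fun_comp[OF s] recursive_proj)
  ultimately show ?thesis by simp
qed

lemma recursive_fun_if:
  assumes "recursive_pred P" "recursive_fun f" "recursive_fun g"
  shows "recursive_fun (\<lambda>x. if P x then f x else g x)"
proof -
  have "(if P x then f x else g x)
      = f x * (if P x then 1 else 0) + g x * (1 - (if P x then 1 else 0))" for x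
    by auto
  moreover have
    "recursive_fun (\<lambda>x. f x * (if P x then 1 else 0) + g x * (1 - (if P x then 1 else 0)))"
    using assms unfolding recursive_pred_def
    by (intro recursive_fun_add recursive_fun_mult recursive_fun_diff recursive_fun_const)
  ultimately show ?thesis by simp
qed

lemma recursive_pred_le: "recursive_fun f \<Longrightarrow> recursive_fun g \<Longrightarrow> recursive_pred (\<lambda>x. f x \<le> g x)"
proof -
  assume "recursive_fun f" "recursive_fun g"
  then have "recursive_fun (\<lambda>x. 1 - (f x - g x))" by (intro recursive_fun_diff recursive_fun_const)
  moreover have "1 - (f x - g x) = (if f x \<le> g x then 1 else 0)" for x by auto
  ultimately show ?thesis unfolding recursive_pred_def by simp
qed

lemma recursive_pred_less: "recursive_fun f \<Longrightarrow> recursive_fun g \<Longrightarrow> recursive_pred (\<lambda>x. f x < g x)"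
  using recursive_pred_le[OF recursive_fun_Suc] by (simp add: Suc_le_eq)

lemma recursive_pred_eq: "recursive_fun f \<Longrightarrow> recursive_fun g \<Longrightarrow> recursive_pred (\<lambda>x. f x = g x)"
proof -
  assume "recursive_fun f" "recursive_fun g"
  then have "recursive_fun (\<lambda>x. 1 - ((f x - g x) + (g x - f x)))"
    by (intro recursive_fun_diff recursive_fun_add recursive_fun_const)
  moreover have "1 - ((f x - g x) + (g x - f x)) = (if f x = g x then 1 else 0)" for x by auto
  ultimately show ?thesis unfolding recursive_pred_def by simp
qed

lemma recursive_pred_not: "recursive_pred P \<Longrightarrow> recursive_pred (\<lambda>x. \<not> P x)"
proof -
  assume "recursive_pred P"
  then have "recursive_fun (\<lambda>x. 1 - (if P x then 1 else 0))"
    unfolding recursive_pred_def by (intro recursive_fun_diff recursive_fun_const)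
  moreover have "1 - (if P x then 1 else 0) = (if \<not> P x then 1 else (0::nat))" for x by auto
  ultimately show ?thesis unfolding recursive_pred_def by simp
qed

lemma recursive_pred_conj: "recursive_pred P \<Longrightarrow> recursive_pred Q \<Longrightarrow> recursive_pred (\<lambda>x. P x \<and> Q x)"
proof -
  assume "recursive_pred P" "recursive_pred Q"
  then have "recursive_fun (\<lambda>x. (if P x then 1 else 0) * (if Q x then 1 else 0))"
    unfolding recursive_pred_def by (rule recursive_fun_mult)
  moreover have
    "(if P x then 1 else 0) * (if Q x then 1 else 0) = (if P x \<and> Q x then 1 else (0::nat))" for x
    by auto
  ultimately show ?thesis unfolding recursive_pred_def by simp
qed

lemma recursive_pred_ex_less:
  assumes "recursive_pred (\<lambda>w. P (pfst w) (psnd w))" "recursive_fun m"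
  shows "recursive_pred (\<lambda>x. \<exists>j<m x. P x j)"
proof -
  have "recursive_fun (\<lambda>x. \<Sum>j<m x. if P x j then 1 else 0)"
    using assms unfolding recursive_pred_def by (intro recursive_fun_sum) auto
  then have "recursive_pred (\<lambda>x. 0 < (\<Sum>j<m x. if P x j then 1 else (0::nat)))"
    by (intro recursive_pred_less recursive_fun_const)
  moreover have "(0 < (\<Sum>j<m x. if P x j then 1 else (0::nat))) \<longleftrightarrow> (\<exists>j<m x. P x j)" for x
  proof -
    have "(\<Sum>j<m x. if P x j then 1 else (0::nat)) = 0 \<longleftrightarrow> (\<forall>j<m x. \<not> P x j)"
      by (subst sum_eq_0_iff) auto
    then show ?thesis by (simp only: neq0_conv[symmetric]) auto
  qed
  ultimately show ?thesis by simp
qed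

lemma sum_indicator_eq_card: "(\<Sum>j<(n::nat). if Q j then 1 else (0::nat)) = card {j. j < n \<and> Q j}"
proof (induction n)
  case (Suc n)
  have "{j. j < Suc n \<and> Q j} = {j. j < n \<and> Q j} \<union> (if Q n then {n} else {})"
    by (auto simp: less_Suc_eq)
  then show ?case using Suc by (auto simp: card_insert_if)
qed simp

lemma sum_indicator_less: "(\<Sum>j<n. if j < d then 1 else (0::nat)) = min n d"
  by (induction n) (auto simp: min_def)

lemma div_eq_sum_indicator:
  "(a::nat) div b = (if b = 0 then 0 else \<Sum>j<a. if Suc j * b \<le> a then 1 else 0)"
proof (cases "b = 0")
  case False
  have "Suc j * b \<le> a \<longleftrightarrow> j < a div b" for j
    using False less_eq_div_iff_mult_less_eq[of b "Suc j" a] by (simp only: Suc_le_eq)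
  then have "(\<Sum>j<a. if Suc j * b \<le> a then 1 else (0::nat)) = min a (a div b)"
    by (simp only: sum_indicator_less)
  then show ?thesis using False by (simp add: div_le_dividend min_absorb2)
qed simp

lemma recursive_fun_div: "recursive_fun f \<Longrightarrow> recursive_fun g \<Longrightarrow> recursive_fun (\<lambda>x. f x div g x)"
proof -
  assume f: "recursive_fun f" and g: "recursive_fun g"
  have "recursive_pred (\<lambda>w. Suc (psnd w) * g (pfst w) \<le> f (pfst w))"
    by (intro recursive_pred_le recursive_fun_mult recursive_fun_Suc recursive_proj
        recursive_fun_comp[OF f] recursive_fun_comp[OF g] recursive_fun_pfst)
  then have "recursive_fun (\<lambda>x. if g x = 0 then 0 else \<Sum>j<f x. if Suc j * g x \<le> f x then 1 else 0)"
    unfolding recursive_pred_def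
    by (intro recursive_fun_if[OF recursive_pred_eq[OF g recursive_fun_const] recursive_fun_const]
        recursive_fun_sum[OF _ f])
  then show ?thesis by (subst div_eq_sum_indicator)
qed

lemma recursive_fun_mod: "recursive_fun f \<Longrightarrow> recursive_fun g \<Longrightarrow> recursive_fun (\<lambda>x. f x mod g x)"
proof -
  assume f: "recursive_fun f" and g: "recursive_fun g"
  have "recursive_fun (\<lambda>x. f x - g x * (f x div g x))"
    by (intro recursive_fun_diff recursive_fun_mult recursive_fun_div f g)
  then show ?thesis by (simp add: minus_div_mult_eq_mod[symmetric] mult.commute)
qed


definition code_tl :: "nat \<Rightarrow> nat" where "code_tl c = psnd (c - 1)"
definition code_hd :: "nat \<Rightarrow> nat" where "code_hd c = pfst (c - 1)"
definition code_nth :: "nat \<Rightarrow> nat \<Rightarrow> nat" where "code_nth c j = code_hd ((code_tl ^^ j) c)"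
definition code_length :: "nat \<Rightarrow> nat" where
  "code_length c = (\<Sum>j<c. if (code_tl ^^ j) c = 0 then 0 else 1)"

lemma prod_decode_0: "prod_decode 0 = (0, 0)"
proof -
  have "prod_encode (0, 0) = 0" by (simp add: prod_encode_def)
  then show ?thesis by (metis prod_encode_inverse)
qed

lemma code_tl_list_encode: "code_tl (list_encode xs) = list_encode (tl xs)"
  by (cases xs) (auto simp: code_tl_def prod_decode_0)

lemma funpow_code_tl_list_encode: "(code_tl ^^ j) (list_encode xs) = list_encode (drop j xs)"
proof (induction j arbitrary: xs)
  case (Suc j)
  then show ?case
    by (simp only: funpow_Suc_right o_apply code_tl_list_encode) (simp add: drop_Suc)
qed simp

lemma code_nth_list_encode: "j < length xs \<Longrightarrow> code_nth (list_encode xs) j = xs ! j"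
  unfolding code_nth_def funpow_code_tl_list_encode code_hd_def
  by (subst Cons_nth_drop_Suc[symmetric]) (auto simp del: Cons_nth_drop_Suc)

lemma length_le_list_encode: "length xs \<le> list_encode xs"
proof (induction xs)
  case (Cons a xs)
  then show ?case using le_prod_encode_2[of "list_encode xs" a] by simp
qed simp

lemma code_length_list_encode: "code_length (list_encode xs) = length xs"
proof -
  have "list_encode ys = 0 \<longleftrightarrow> ys = []" for ys :: "nat list"
    by (cases ys) auto
  then have "code_length (list_encode xs) = (\<Sum>j<list_encode xs. if j < length xs then 1 else 0)"
    unfolding code_length_def funpow_code_tl_list_encode by (intro sum.cong) auto
  also have "\<dots> = length xs"
    using sum_indicator_less length_le_list_encode by (simp add: min_absorb2)
  finally show ?thesis .
qed

lemma recursive_fun_code_nth: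
  "recursive_fun f \<Longrightarrow> recursive_fun g \<Longrightarrow> recursive_fun (\<lambda>x. code_nth (f x) (g x))"
  unfolding code_nth_def code_hd_def code_tl_def
  by (intro recursive_fun_pfst recursive_fun_pred recursive_fun_funpow recursive_proj)

lemma recursive_fun_code_length: "recursive_fun f \<Longrightarrow> recursive_fun (\<lambda>x. code_length (f x))"
proof -
  assume f: "recursive_fun f"
  have "recursive_fun (\<lambda>w. if (code_tl ^^ psnd w) (f (pfst w)) = 0 then 0 else 1)"
    unfolding code_tl_def
    by (intro recursive_fun_if recursive_pred_eq recursive_fun_funpow recursive_fun_comp[OF f]
        recursive_proj recursive_fun_pred recursive_fun_const)
  then show ?thesis unfolding code_length_def by (intro recursive_fun_sum[OF _ f])
qed

lemmas recursive_intros = recursive_proj recursive_fun_Suc recursive_fun_prod_encode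
  recursive_fun_add recursive_fun_mult recursive_fun_diff recursive_fun_power recursive_fun_div
  recursive_fun_mod recursive_fun_sum recursive_fun_if recursive_fun_code_nth recursive_fun_code_length
  recursive_fun_const recursive_pred_le recursive_pred_less recursive_pred_eq recursive_pred_not
  recursive_pred_conj recursive_pred_ex_less

definition prefix_code :: "baire \<Rightarrow> nat \<Rightarrow> nat" where
  "prefix_code p k = list_encode (map p [0..<k])"

lemma code_length_prefix_code: "code_length (prefix_code p k) = k"
  unfolding prefix_code_def code_length_list_encode by simp

lemma code_nth_prefix_code: "j < k \<Longrightarrow> code_nth (prefix_code p k) j = p j"
  unfolding prefix_code_def by (simp add: code_nth_list_encode)

abbreviation query :: "(nat \<Rightarrow> nat) \<Rightarrow> baire \<Rightarrow> nat \<Rightarrow> nat \<Rightarrow> nat" where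
  "query c p n k \<equiv> c (prod_encode (n, prefix_code p k))"

definition prefix_machine :: "(nat \<Rightarrow> nat) \<Rightarrow> baire \<Rightarrow> baire option" where
  "prefix_machine c p = (if \<forall>n. \<exists>k. query c p n k \<noteq> 0
     then Some (\<lambda>n. query c p n (LEAST k. query c p n k \<noteq> 0) - 1) else None)"

lemma computable_prefix_machine:
  assumes "recursive_fun c"
  shows "computable (prefix_machine c)"
proof -
  obtain e where e: "\<And>x. evalr e x (c x)" using assms unfolding recursive_fun_def by blast
  show ?thesis unfolding computable_def
  proof (intro exI[of _ e] allI impI)
    fix p q n
    assume F: "prefix_machine c p = Some q"
    then have ex: "\<forall>n. \<exists>k. query c p n k \<noteq> 0"
      unfolding prefix_machine_def by (metis option.distinct(1))
    define k where "k = (LEAST k. query c p n k \<noteq> 0)"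
    have "query c p n k \<noteq> 0"
      using LeastI_ex[of "\<lambda>k. query c p n k \<noteq> 0"] ex unfolding k_def by blast
    moreover have "q n = query c p n k - 1"
      using F ex unfolding prefix_machine_def k_def by auto
    ultimately have "query c p n k = Suc (q n)" by simp
    moreover have "query c p n k' = 0" if "k' < k" for k'
      using not_less_Least[of k' "\<lambda>k. query c p n k \<noteq> 0"] that unfolding k_def by blast
    ultimately show "\<exists>k. evalr e (prod_encode (n, list_encode (map p [0..<k]))) (Suc (q n)) \<and>
        (\<forall>k'<k. evalr e (prod_encode (n, list_encode (map p [0..<k']))) 0)"
      using e unfolding prefix_code_def by metis
  qed
qed

lemma prefix_machine_eqI:
  assumes "\<And>n. \<exists>k. query c p n k \<noteq> 0"
    and "\<And>n k. query c p n k \<noteq> 0 \<Longrightarrow> query c p n k = Suc (q n)"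
  shows "prefix_machine c p = Some q"
proof -
  have "query c p n (LEAST k. query c p n k \<noteq> 0) - 1 = q n" for n
  proof -
    have "query c p n (LEAST k. query c p n k \<noteq> 0) \<noteq> 0"
      by (rule LeastI_ex) (rule assms(1))
    then show ?thesis using assms(2) by (metis diff_Suc_1)
  qed
  then show ?thesis using assms(1) unfolding prefix_machine_def by auto
qed


section \<open>Embedding Baire space into the reals\<close>

definition block_start :: "baire \<Rightarrow> nat \<Rightarrow> nat" where
  "block_start t n = (\<Sum>k<n. Suc (t k))"

definition digit :: "baire \<Rightarrow> nat \<Rightarrow> nat" where
  "digit t j = (if \<exists>n. j = block_start t n + t n then 1 else 2)"

primrec digit_prefix :: "baire \<Rightarrow> nat \<Rightarrow> nat" where
  "digit_prefix t 0 = 0"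
| "digit_prefix t (Suc J) = 4 * digit_prefix t J + digit t J"

definition baire_embed :: "baire \<Rightarrow> real" where
  "baire_embed t = (\<Sum>j. real (digit t j) / 4 ^ Suc j)"

definition digit_tail :: "baire \<Rightarrow> nat \<Rightarrow> real" where
  "digit_tail t J = (\<Sum>j. real (digit t (j + J)) / 4 ^ Suc j)"

lemma block_start_Suc: "block_start t (Suc n) = block_start t n + t n + 1"
  by (simp add: block_start_def)

lemma block_start_mono: "n \<le> n' \<Longrightarrow> block_start t n \<le> block_start t n'"
  unfolding block_start_def by (rule sum_mono2) auto

lemma le_block_start: "n \<le> block_start t n"
  unfolding block_start_def using sum_mono[of "{..<n}" "\<lambda>_. 1::nat" "\<lambda>k. Suc (t k)"] by simp

lemma digit_cases: "digit t j = 1 \<or> digit t j = 2"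
  by (simp add: digit_def)

lemma digit_le_2: "real (digit t j) \<le> 2" and digit_ge_1: "1 \<le> real (digit t j)"
  using digit_cases[of t j] by auto

lemma summable_digit_tail: "summable (\<lambda>j. real (digit t (j + J)) / 4 ^ Suc j)"
proof (rule summable_comparison_test)
  show "\<exists>N. \<forall>n\<ge>N. norm (real (digit t (n + J)) / 4 ^ Suc n) \<le> 2 * (1/4) ^ Suc n"
  proof (intro exI[of _ 0] allI impI)
    fix n :: nat
    have "real (digit t (n + J)) / 4 ^ Suc n \<le> 2 / 4 ^ Suc n"
      using digit_le_2 by (intro divide_right_mono) auto
    then show "norm (real (digit t (n + J)) / 4 ^ Suc n) \<le> 2 * (1/4) ^ Suc n"
      by (simp add: power_divide)
  qed
  show "summable (\<lambda>n. 2 * (1/4::real) ^ Suc n)"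
    by (intro summable_mult summable_Suc_iff[THEN iffD2] summable_geometric) simp
qed

lemma suminf_quarter_powers: "(\<Sum>j. (1/4::real) ^ Suc j) = 1/3"
proof -
  have "(\<Sum>j. (1/4::real) ^ Suc j) = (1/4) * (\<Sum>j. (1/4) ^ j)"
    by (subst suminf_mult[symmetric]) (auto intro: summable_geometric)
  also have "\<dots> = 1/3" by (subst suminf_geometric) auto
  finally show ?thesis .
qed

lemma digit_tail_bounds: "1/3 \<le> digit_tail t J" "digit_tail t J \<le> 2/3"
proof -
  have s1: "summable (\<lambda>j. (1/4::real) ^ Suc j)"
    by (intro summable_Suc_iff[THEN iffD2] summable_geometric) simp
  have le1: "(1/4::real) ^ Suc j \<le> real (digit t (j + J)) / 4 ^ Suc j" for j
  proof -
    have "1 / 4 ^ Suc j \<le> real (digit t (j + J)) / 4 ^ Suc j"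
      using digit_ge_1 by (intro divide_right_mono) auto
    then show ?thesis by (simp only: power_divide power_one)
  qed
  have le2: "real (digit t (j + J)) / 4 ^ Suc j \<le> 2 * (1/4::real) ^ Suc j" for j
  proof -
    have "real (digit t (j + J)) / 4 ^ Suc j \<le> 2 / 4 ^ Suc j"
      using digit_le_2 by (intro divide_right_mono) auto
    then show ?thesis by (simp add: power_divide)
  qed
  show "1/3 \<le> digit_tail t J" unfolding digit_tail_def
    using suminf_le[OF le1 s1 summable_digit_tail] suminf_quarter_powers by simp
  have "digit_tail t J \<le> (\<Sum>j. 2 * (1/4::real) ^ Suc j)" unfolding digit_tail_def
    by (rule suminf_le[OF le2 summable_digit_tail]) (intro summable_mult s1)
  also have "\<dots> = 2/3" using suminf_quarter_powers by (subst suminf_mult) (auto intro: s1)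
  finally show "digit_tail t J \<le> 2/3" .
qed

lemma digit_tail_Suc: "digit_tail t J = (real (digit t J) + digit_tail t (Suc J)) / 4"
proof -
  let ?f = "\<lambda>j. real (digit t (j + J)) / 4 ^ Suc j"
  have "(\<Sum>n. ?f (Suc n)) = suminf ?f - ?f 0" by (rule suminf_split_head[OF summable_digit_tail])
  moreover have "(\<lambda>n. ?f (Suc n)) = (\<lambda>n. (real (digit t (n + Suc J)) / 4 ^ Suc n) / 4)"
    by (auto simp: field_simps)
  moreover have "(\<Sum>n. (real (digit t (n + Suc J)) / 4 ^ Suc n) / 4) = digit_tail t (Suc J) / 4"
    using suminf_divide[OF summable_digit_tail[of t "Suc J"], of 4] unfolding digit_tail_def by simp
  ultimately have "digit_tail t (Suc J) / 4 = digit_tail t J - real (digit t J) / 4"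
    unfolding digit_tail_def by simp
  then show ?thesis by simp
qed

lemma digit_tail_0: "digit_tail t 0 = baire_embed t" unfolding digit_tail_def baire_embed_def
  by simp

lemma baire_embed_split: "baire_embed t = (real (digit_prefix t J) + digit_tail t J) / 4 ^ J"
proof (induction J)
  case 0 show ?case by (simp only: digit_tail_0 digit_prefix.simps power_0 div_by_1 of_nat_0 add_0)
next
  case (Suc J)
  have "baire_embed t
      = (real (digit_prefix t J) + (real (digit t J) + digit_tail t (Suc J)) / 4) / 4 ^ J"
    using Suc digit_tail_Suc[of t J] by simp
  also have "\<dots> = (real (digit_prefix t (Suc J)) + digit_tail t (Suc J)) / 4 ^ Suc J"
    by (simp add: field_simps)
  finally show ?case .
qed

lemma baire_embed_bounds: "1/3 \<le> baire_embed t" "baire_embed t \<le> 2/3"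
  using baire_embed_split[of t 0] digit_tail_bounds[of t 0] by auto

lemma one_plus_baire_embed_pos: "0 < 1 + baire_embed t"
  using baire_embed_bounds(1)[of t] by linarith

lemma digit_eq_1_before_block:
  "j < block_start t m + t m \<Longrightarrow> digit t j = 1 \<longleftrightarrow> (\<exists>n<m. j = block_start t n + t n)"
proof -
  assume j: "j < block_start t m + t m"
  have "block_start t m + t m \<le> block_start t n + t n" if "m \<le> n" for n
  proof (cases "m = n")
    case False
    then have "Suc m \<le> n" using that by simp
    then have "block_start t (Suc m) \<le> block_start t n" by (rule block_start_mono)
    then show ?thesis by (simp add: block_start_Suc)
  qed simp
  have "(\<exists>n. j = block_start t n + t n) \<longleftrightarrow> (\<exists>n<m. j = block_start t n + t n)"
  proof
    assume "\<exists>n. j = block_start t n + t n"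
    then obtain n where n: "j = block_start t n + t n" by blast
    have "n < m"
    proof (rule ccontr)
      assume "\<not> n < m"
      then have "block_start t m + t m \<le> block_start t n + t n" using \<open>\<And>n. m \<le> n \<Longrightarrow> _\<close> by simp
      then show False using j n by simp
    qed
    then show "\<exists>n<m. j = block_start t n + t n" using n by blast
  qed blast
  then show ?thesis by (simp add: digit_def)
qed

lemma digit_block_end: "digit t (block_start t m + t m) = 1"
  by (auto simp: digit_def)

lemma block_start_cong: "(\<forall>k<m. u k = v k) \<Longrightarrow> n \<le> m \<Longrightarrow> block_start u n = block_start v n"
  unfolding block_start_def by (rule sum.cong) auto

lemma digit_prefix_cong: "(\<forall>j<J. digit u j = digit v j) \<Longrightarrow> digit_prefix u J = digit_prefix v J"
  by (induction J) auto

lemma digit_cong: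
  assumes "\<forall>k<m. u k = v k" "j < block_start u m + u m" "j < block_start v m + v m"
  shows "digit u j = digit v j"
proof -
  have "(\<exists>n<m. j = block_start u n + u n) \<longleftrightarrow> (\<exists>n<m. j = block_start v n + v n)"
    using assms(1) block_start_cong[OF assms(1)] by (metis less_imp_le)
  then have "digit u j = 1 \<longleftrightarrow> digit v j = 1" using digit_eq_1_before_block assms(2,3) by blast
  then show ?thesis using digit_cases[of u j] digit_cases[of v j] by auto
qed

lemma baire_embed_lex_less:
  assumes agree: "\<forall>k<m. u k = v k" and less: "u m < v m"
  shows "baire_embed u < baire_embed v"
proof -
  define D where "D = block_start u m + u m"
  have Pm: "block_start u m = block_start v m" using block_start_cong[OF agree] by simp
  have "\<forall>j<D. digit u j = digit v j"
    using digit_cong[OF agree] less Pm unfolding D_def by auto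
  then have NdD: "digit_prefix u D = digit_prefix v D" by (rule digit_prefix_cong)
  have du: "digit u D = 1" unfolding D_def by (rule digit_block_end)
  have "D < block_start v m + v m" using less Pm unfolding D_def by simp
  then have "digit v D = 1 \<longleftrightarrow> (\<exists>n<m. D = block_start v n + v n)" by (rule digit_eq_1_before_block)
  moreover have "block_start v n + v n < D" if "n < m" for n
  proof -
    have "block_start v (Suc n) \<le> block_start v m" using that by (intro block_start_mono) simp
    then show ?thesis using Pm unfolding D_def by (simp add: block_start_Suc)
  qed
  ultimately have dv: "digit v D = 2" using digit_cases[of v D] by auto
  have "baire_embed u = (real (digit_prefix u (Suc D)) + digit_tail u (Suc D)) / 4 ^ Suc D"
    by (rule baire_embed_split)
  also have "\<dots> < (real (digit_prefix v (Suc D)) + digit_tail v (Suc D)) / 4 ^ Suc D"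
    using digit_tail_bounds[of u "Suc D"] digit_tail_bounds[of v "Suc D"] NdD du dv
    by (intro divide_strict_right_mono) auto
  also have "\<dots> = baire_embed v" by (rule baire_embed_split[symmetric])
  finally show ?thesis .
qed

definition baire_embed_approx :: "baire \<Rightarrow> nat \<Rightarrow> real" where
  "baire_embed_approx t n = real (digit_prefix t (block_start t n)) / 4 ^ (block_start t n)"

lemma baire_embed_approx_nonneg: "0 \<le> baire_embed_approx t n"
  by (simp add: baire_embed_approx_def)

lemma digit_prefix_div_mono:
  "J \<le> J' \<Longrightarrow> real (digit_prefix t J) / 4 ^ J \<le> real (digit_prefix t J') / 4 ^ J'"
proof (induction J' rule: dec_induct)
  case (step n)
  have "real (digit_prefix t n) / 4 ^ n \<le> real (4 * digit_prefix t n + digit t n) / 4 ^ Suc n"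
    by (simp add: field_simps)
  then show ?case using step by simp
qed simp

lemma baire_embed_approx_le: "baire_embed_approx t n \<le> baire_embed t"
  unfolding baire_embed_approx_def baire_embed_split[of t "block_start t n"]
    using digit_tail_bounds[of t "block_start t n"]
  by (intro divide_right_mono) auto

lemma baire_embed_le_approx: "baire_embed t \<le> baire_embed_approx t n + 1 / 4 ^ n"
proof -
  have "baire_embed t
      = baire_embed_approx t n + digit_tail t (block_start t n) / 4 ^ block_start t n"
    unfolding baire_embed_approx_def baire_embed_split[of t "block_start t n"]
      by (simp add: add_divide_distrib)
  also have "digit_tail t (block_start t n) / 4 ^ block_start t n \<le> 1 / 4 ^ block_start t n"
    using digit_tail_bounds[of t "block_start t n"] by (intro divide_right_mono) auto
  also have "1 / 4 ^ block_start t n \<le> (1 / 4 ^ n :: real)"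
    using le_block_start[of n t] by (intro divide_left_mono power_increasing) auto
  finally show ?thesis by simp
qed

lemma baire_embed_approx_mono: "n \<le> n' \<Longrightarrow> baire_embed_approx t n \<le> baire_embed_approx t n'"
  unfolding baire_embed_approx_def by (intro digit_prefix_div_mono block_start_mono)

lemma baire_embed_approx_cong: "(\<forall>k<n. u k = v k) \<Longrightarrow> baire_embed_approx u n = baire_embed_approx v n"
proof -
  assume a: "\<forall>k<n. u k = v k"
  have Pn: "block_start u n = block_start v n" using block_start_cong[OF a] by simp
  have "\<forall>j<block_start u n. digit u j = digit v j"
    using digit_cong[OF a] Pn by auto
  then show ?thesis unfolding baire_embed_approx_def Pn[symmetric] by (simp add: digit_prefix_cong)
qed

lemma digit_prefix_div: "J \<le> J' \<Longrightarrow> digit_prefix t J' div 4 ^ (J' - J) = digit_prefix t J"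
proof (induction J' rule: dec_induct)
  case (step n)
  have d4: "digit t n < 4" using digit_cases[of t n] by auto
  have "Suc n - J = Suc (n - J)" using step(1) by simp
  then have "digit_prefix t (Suc n) div 4 ^ (Suc n - J)
      = ((4 * digit_prefix t n + digit t n) div 4) div 4 ^ (n - J)"
    by (simp add: div_mult2_eq)
  also have "(4 * digit_prefix t n + digit t n) div 4 = digit_prefix t n" using d4 by simp
  finally show ?case using step by simp
qed simp

lemma digit_prefix_digit: "j < J \<Longrightarrow> (digit_prefix t J div 4 ^ (J - Suc j)) mod 4 = digit t j"
proof -
  assume "j < J"
  then have "digit_prefix t J div 4 ^ (J - Suc j) = digit_prefix t (Suc j)"
    by (intro digit_prefix_div) simp
  moreover have "digit t j < 4" using digit_cases[of t j] by auto
  ultimately show ?thesis by simp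
qed

lemma floor_digit_prefix:
  assumes "\<bar>w - baire_embed t\<bar> \<le> 1 / (4 * 4 ^ J)"
  shows "\<lfloor>4 ^ J * w\<rfloor> = int (digit_prefix t J)"
proof -
  have e: "4 ^ J * baire_embed t = real (digit_prefix t J) + digit_tail t J"
    using baire_embed_split[of t J] by simp
  have "\<bar>4 ^ J * w - 4 ^ J * baire_embed t\<bar> \<le> 1/4"
  proof -
    have "\<bar>4 ^ J * w - 4 ^ J * baire_embed t\<bar> = 4 ^ J * \<bar>w - baire_embed t\<bar>"
      by (simp add: abs_mult right_diff_distrib[symmetric])
    also have "\<dots> \<le> 4 ^ J * (1 / (4 * 4 ^ J))" using assms by (intro mult_left_mono) auto
    also have "\<dots> = 1/4" by simp
    finally show ?thesis .
  qed
  then have "real (digit_prefix t J) \<le> 4 ^ J * w" "4 ^ J * w < real (digit_prefix t J) + 1"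
    using e digit_tail_bounds[of t J] by (simp_all only: e abs_le_iff) linarith+
  then show ?thesis by linarith
qed

definition ends_before :: "baire \<Rightarrow> nat \<Rightarrow> nat" where
  "ends_before t j = (\<Sum>i<j. if digit t i = 1 then 1 else 0)"

lemma digit_inside_block: "s < t r \<Longrightarrow> digit t (block_start t r + s) = 2"
proof -
  assume s: "s < t r"
  have "\<not> (\<exists>n<r. block_start t r + s = block_start t n + t n)"
  proof
    assume "\<exists>n<r. block_start t r + s = block_start t n + t n"
    then obtain n where "n < r" "block_start t r + s = block_start t n + t n" by blast
    moreover have "block_start t (Suc n) \<le> block_start t r" using \<open>n < r\<close>
      by (intro block_start_mono) simp
    ultimately show False by (simp add: block_start_Suc)
  qed
  then show ?thesis
    using digit_eq_1_before_block[of "block_start t r + s" t r] s digit_cases[of t "block_start t r + s"]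
    by auto
qed

lemma ends_before_in_block:
  "s \<le> t r \<Longrightarrow> ends_before t (block_start t r + s) = ends_before t (block_start t r)"
proof (induction s)
  case (Suc s)
  then have "ends_before t (block_start t r + Suc s) = ends_before t (block_start t r + s)"
    using digit_inside_block[of s t r] by (simp add: ends_before_def)
  then show ?case using Suc by simp
qed simp

lemma ends_before_block_start: "ends_before t (block_start t r) = r"
proof (induction r)
  case 0 then show ?case by (simp add: ends_before_def block_start_def)
next
  case (Suc r)
  have "ends_before t (block_start t (Suc r)) = ends_before t (Suc (block_start t r + t r))"
    by (simp add: block_start_Suc)
  also have "\<dots> = ends_before t (block_start t r + t r) + 1" using digit_block_end[of t r]
    by (simp add: ends_before_def)
  also have "\<dots> = Suc r" using ends_before_in_block[of "t r" t r] Suc by simp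
  finally show ?case .
qed

lemma ends_before_block: "s \<le> t r \<Longrightarrow> ends_before t (block_start t r + s) = r"
  using ends_before_in_block ends_before_block_start by simp

lemma in_some_block: "\<exists>r s. s \<le> t r \<and> j = block_start t r + s"
proof -
  have ex: "\<exists>r. j < block_start t (Suc r)" using le_block_start[of "Suc j" t]
    by (intro exI[of _ j]) simp
  define r where "r = (LEAST r. j < block_start t (Suc r))"
  have jr: "j < block_start t (Suc r)" unfolding r_def by (rule LeastI_ex[OF ex])
  have "block_start t r \<le> j"
  proof (cases r)
    case (Suc r')
    then have "\<not> j < block_start t (Suc r')" unfolding r_def
      using not_less_Least[of r' "\<lambda>r. j < block_start t (Suc r)"] Suc r_def by simp
    then show ?thesis using Suc by simp
  qed (simp add: block_start_def)
  then show ?thesis using jr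
    by (intro exI[of _ r] exI[of _ "j - block_start t r"]) (auto simp: block_start_Suc)
qed

lemma block_length_from_digits:
  assumes "block_start t r + t r < J"
  shows "(\<Sum>j<J. if ends_before t j = r \<and> digit t j = 2 then 1 else (0::nat)) = t r"
proof -
  have "{j. j < J \<and> ends_before t j = r \<and> digit t j = 2}
      = {block_start t r ..< block_start t r + t r}"
  proof (intro set_eqI iffI)
    fix j assume j: "j \<in> {j. j < J \<and> ends_before t j = r \<and> digit t j = 2}"
    obtain r' s where rs: "s \<le> t r'" "j = block_start t r' + s" using in_some_block by blast
    then have "r' = r" using j ends_before_block by auto
    moreover have "s \<noteq> t r'" using j rs digit_block_end[of t r'] by auto
    ultimately show "j \<in> {block_start t r ..< block_start t r + t r}" using rs by auto
  next
    fix j assume j: "j \<in> {block_start t r ..< block_start t r + t r}"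
    then obtain s where s: "s < t r" "j = block_start t r + s"
      by (metis atLeastLessThan_iff le_Suc_ex nat_add_left_cancel_less)
    then show "j \<in> {j. j < J \<and> ends_before t j = r \<and> digit t j = 2}"
      using assms ends_before_block[of s t r] digit_inside_block[of s t r] by auto
  qed
  then show ?thesis by (simp add: sum_indicator_eq_card)
qed

lemma ends_before_mono: "j \<le> j' \<Longrightarrow> ends_before t j \<le> ends_before t j'"
  unfolding ends_before_def by (rule sum_mono2) auto

lemma block_end_before: "Suc r \<le> ends_before t J \<Longrightarrow> block_start t r + t r < J"
proof -
  assume a: "Suc r \<le> ends_before t J"
  obtain r' s where rs: "s \<le> t r'" "J = block_start t r' + s" using in_some_block by blast
  then have "Suc r \<le> r'" using a ends_before_block by auto
  then have "block_start t (Suc r) \<le> block_start t r'" by (rule block_start_mono)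
  then show ?thesis using rs by (simp add: block_start_Suc)
qed

lemma ends_before_ge: "block_start t (Suc r) \<le> J \<Longrightarrow> Suc r \<le> ends_before t J"
  using ends_before_mono[of "block_start t (Suc r)" J t] ends_before_block_start[of t "Suc r"]
    by simp


section \<open>Stage-wise approximations of the input\<close>

text \<open>A name p of a pair (x, xs) carries the bit x n at p (2 * n) and xs j l at
  seq_entry p j l.\<close>

definition seq_entry :: "baire \<Rightarrow> nat \<Rightarrow> nat \<Rightarrow> nat" where
  "seq_entry p j l = p (2 * prod_encode (j, l) + 1)"

definition bit_count :: "nat \<Rightarrow> baire \<Rightarrow> nat \<Rightarrow> nat" where
  "bit_count b p i = (\<Sum>j<i. if p (2 * j) = b then 1 else 0)"

definition change_set :: "baire \<Rightarrow> nat \<Rightarrow> nat set" where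
  "change_set p k = {j. \<exists>l<Suc k. seq_entry p (Suc j) l \<noteq> seq_entry p j l}"

definition changes_before :: "baire \<Rightarrow> nat \<Rightarrow> nat \<Rightarrow> nat" where
  "changes_before p i k
    = (\<Sum>j<i. if \<exists>l<Suc k. seq_entry p (Suc j) l \<noteq> seq_entry p j l then 1 else 0)"

definition stage_seq :: "nat \<Rightarrow> baire \<Rightarrow> nat \<Rightarrow> baire" where
  "stage_seq b p i m = (if m mod 3 = 0 then (if m div 3 < bit_count b p i then 1 else 0)
     else if m mod 3 = 1 then changes_before p i (m div 3) else seq_entry p i (m div 3))"

definition limit_seq :: "nat \<Rightarrow> baire \<Rightarrow> baire \<Rightarrow> baire" where
  "limit_seq b p L m = (if m mod 3 = 0 then (if \<exists>i. m div 3 < bit_count b p i then 1 else 0)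
     else if m mod 3 = 1 then card (change_set p (m div 3)) else L (m div 3))"

lemma mod_div_3:
  "(3 * (k::nat) + 1) div 3 = k" "(3 * k + 1) mod 3 = 1" "(3 * k + 2) div 3 = k"
  "(3 * k + 2) mod 3 = 2" "(3 * k) div 3 = k" "(3 * k) mod 3 = 0"
  by presburger+

lemma changes_before_eq_card: "changes_before p i k = card (change_set p k \<inter> {..<i})"
  unfolding changes_before_def change_set_def sum_indicator_eq_card
  by (rule arg_cong[where f=card]) auto

lemma bit_count_mono: "i \<le> i' \<Longrightarrow> bit_count b p i \<le> bit_count b p i'"
  unfolding bit_count_def by (rule sum_mono2) auto

lemma eventually_bit_count_flag:
  "eventually (\<lambda>i. k < bit_count b p i \<longleftrightarrow> (\<exists>i. k < bit_count b p i)) sequentially"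
proof (cases "\<exists>i. k < bit_count b p i")
  case True
  then obtain i0 where "k < bit_count b p i0" by blast
  then have "k < bit_count b p i" if "i0 \<le> i" for i
    using bit_count_mono[OF that, of b p] by simp
  with True show ?thesis by (simp add: eventually_sequentially) blast
qed simp

lemma limit_seq_entry: "limit_seq b p L (3 * k + 2) = L k"
  unfolding limit_seq_def mod_div_3 by simp

context
  fixes p L :: baire
  assumes seq_entry_converges: "\<And>k. eventually (\<lambda>i. seq_entry p i k = L k) sequentially"
begin

lemma eventually_not_in_change_set: "\<exists>N. \<forall>j\<ge>N. j \<notin> change_set p k"
proof -
  have "eventually (\<lambda>i. \<forall>l\<in>{..<Suc k}. seq_entry p i l = L l) sequentially"
    using seq_entry_converges by (intro eventually_ball_finite) auto
  then obtain N where "\<And>i l. i \<ge> N \<Longrightarrow> l < Suc k \<Longrightarrow> seq_entry p i l = L l"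
    unfolding eventually_sequentially by auto
  then show ?thesis unfolding change_set_def by (intro exI[of _ N]) (auto simp: le_Suc_eq)
qed

lemma finite_change_set: "finite (change_set p k)"
proof -
  obtain N where "\<forall>j\<ge>N. j \<notin> change_set p k" using eventually_not_in_change_set by blast
  then have "change_set p k \<subseteq> {..<N}" by (auto simp: not_le[symmetric])
  then show ?thesis using finite_subset by blast
qed

lemma stage_seq_eventually: "eventually (\<lambda>i. stage_seq b p i m = limit_seq b p L m) sequentially"
proof -
  consider "m mod 3 = 0" | "m mod 3 = 1" | "m mod 3 = 2" by linarith
  then show ?thesis
  proof cases
    case 1
    show ?thesis using eventually_bit_count_flag[of "m div 3" b p]
      by (rule eventually_mono) (simp add: 1 stage_seq_def limit_seq_def)
  next
    case 2
    obtain N where N: "\<forall>j\<ge>N. j \<notin> change_set p (m div 3)"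
      using eventually_not_in_change_set by blast
    show ?thesis
      using eventually_ge_at_top[of N]
    proof (rule eventually_mono)
      fix i assume "N \<le> i"
      then have "change_set p (m div 3) \<inter> {..<i} = change_set p (m div 3)"
        using N by (auto simp: not_le[symmetric])
      then show "stage_seq b p i m = limit_seq b p L m"
        using 2 by (simp add: stage_seq_def limit_seq_def changes_before_eq_card)
    qed
  next
    case 3
    then show ?thesis using seq_entry_converges[of "m div 3"]
      by (simp add: stage_seq_def limit_seq_def)
  qed
qed

lemma stage_seq_eventually_below:
  "eventually (\<lambda>i. \<forall>m<n. stage_seq b p i m = limit_seq b p L m) sequentially"
proof -
  have "eventually (\<lambda>i. \<forall>m\<in>{..<n}. stage_seq b p i m = limit_seq b p L m) sequentially"
    using stage_seq_eventually by (intro eventually_ball_finite) auto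
  then show ?thesis by (rule eventually_mono) auto
qed

lemma seq_entry_settled:
  assumes "changes_before p i k = card (change_set p k)"
  shows "seq_entry p i k = L k"
proof -
  have all: "change_set p k \<inter> {..<i} = change_set p k"
    by (rule card_subset_eq[OF finite_change_set Int_lower1])
      (use assms in \<open>simp only: changes_before_eq_card\<close>)
  have unchanged: "j \<notin> change_set p k" if "i \<le> j" for j
  proof
    assume "j \<in> change_set p k"
    then have "j \<in> change_set p k \<inter> {..<i}" by (subst all)
    then show False using that by simp
  qed
  have stable: "seq_entry p j k = seq_entry p i k" if "i \<le> j" for j
    using that
  proof (induction j rule: dec_induct)
    case (step j)
    then have "j \<notin> change_set p k" using unchanged by blast
    then show ?case using step.IH by (simp add: change_set_def)
  qed simp
  obtain N where "\<And>j. N \<le> j \<Longrightarrow> seq_entry p j k = L k"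
    using seq_entry_converges[of k] unfolding eventually_sequentially by blast
  then show ?thesis using stable[of "max N i"] by simp
qed

lemma stage_seq_first_diff_less:
  assumes agree: "\<forall>k<m. stage_seq b p i k = limit_seq b p L k"
    and ne: "stage_seq b p i m \<noteq> limit_seq b p L m"
  shows "stage_seq b p i m < limit_seq b p L m"
proof -
  consider "m mod 3 = 0" | "m mod 3 = 1" | "m mod 3 = 2" by linarith
  then show ?thesis
  proof cases
    case 1
    then show ?thesis using ne by (auto simp: stage_seq_def limit_seq_def split: if_splits)
  next
    case 2
    have "changes_before p i (m div 3) \<le> card (change_set p (m div 3))"
      unfolding changes_before_eq_card by (rule card_mono[OF finite_change_set]) auto
    then show ?thesis using 2 ne by (simp add: stage_seq_def limit_seq_def)
  next
    case 3
    then have "3 * (m div 3) + 1 < m" by presburger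
    then have "stage_seq b p i (3 * (m div 3) + 1) = limit_seq b p L (3 * (m div 3) + 1)"
      using agree by blast
    then have "seq_entry p i (m div 3) = L (m div 3)"
      by (intro seq_entry_settled) (simp only: stage_seq_def limit_seq_def mod_div_3; simp)
    then show ?thesis using 3 ne by (simp add: stage_seq_def limit_seq_def)
  qed
qed

lemma baire_embed_stage_le: "baire_embed (stage_seq b p i) \<le> baire_embed (limit_seq b p L)"
proof (cases "stage_seq b p i = limit_seq b p L")
  case False
  then have ex: "\<exists>m. stage_seq b p i m \<noteq> limit_seq b p L m" by auto
  define m where "m = (LEAST m. stage_seq b p i m \<noteq> limit_seq b p L m)"
  have ne: "stage_seq b p i m \<noteq> limit_seq b p L m"
    using LeastI_ex[OF ex] unfolding m_def .
  have agree: "\<forall>k<m. stage_seq b p i k = limit_seq b p L k"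
    using not_less_Least[of _ "\<lambda>m. stage_seq b p i m \<noteq> limit_seq b p L m"] unfolding m_def by blast
  show ?thesis using baire_embed_lex_less[OF agree stage_seq_first_diff_less[OF agree ne]] by simp
qed simp

lemma approx_stage_le: "baire_embed_approx (stage_seq b p i) i \<le> baire_embed (limit_seq b p L)"
  using baire_embed_approx_le baire_embed_stage_le order.trans by blast

lemma approx_stage_approaches:
  assumes "0 < e"
  shows "\<exists>i. baire_embed (limit_seq b p L) - e < baire_embed_approx (stage_seq b p i) i"
proof -
  obtain n where n: "(1/4::real) ^ n < e"
    using real_arch_pow_inv[OF assms, of "1/4"] by auto
  have "eventually (\<lambda>i. (\<forall>m<n. stage_seq b p i m = limit_seq b p L m) \<and> n \<le> i) sequentially"
    using stage_seq_eventually_below eventually_ge_at_top by (rule eventually_conj)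
  then obtain i where i: "\<forall>m<n. stage_seq b p i m = limit_seq b p L m" "n \<le> i"
    unfolding eventually_sequentially by blast
  have "baire_embed (limit_seq b p L) - e < baire_embed_approx (limit_seq b p L) n"
    using baire_embed_le_approx[of "limit_seq b p L" n] n by (simp add: power_one_over)
  also have "\<dots> = baire_embed_approx (stage_seq b p i) n"
    using baire_embed_approx_cong i(1) by metis
  also have "\<dots> \<le> baire_embed_approx (stage_seq b p i) i"
    using baire_embed_approx_mono i(2) by blast
  finally show ?thesis by blast
qed

end

lemma bit_count_unbounded:
  assumes "infinite {n. p (2 * n) = b}"
  shows "\<exists>i. k < bit_count b p i"
proof (induction k)
  case 0
  obtain n where "p (2 * n) = b" using assms not_finite_existsD by blast
  then have "0 < bit_count b p (Suc n)" by (simp add: bit_count_def)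
  then show ?case by blast
next
  case (Suc k)
  then obtain i where i: "k < bit_count b p i" by blast
  obtain n where n: "i \<le> n" "p (2 * n) = b"
    using assms unfolding infinite_nat_iff_unbounded_le by blast
  have "bit_count b p i \<le> bit_count b p n" using n(1) by (rule bit_count_mono)
  moreover have "bit_count b p (Suc n) = bit_count b p n + 1" using n(2)
    by (simp add: bit_count_def)
  ultimately have "Suc k < bit_count b p (Suc n)" using i by simp
  then show ?case by blast
qed

lemma bit_count_bounded:
  assumes "finite {n. p (2 * n) = b}"
  shows "\<exists>K. \<forall>i. bit_count b p i \<le> K"
proof -
  obtain N where N: "\<And>n. p (2 * n) = b \<Longrightarrow> n < N"
    using assms unfolding finite_nat_set_iff_bounded by blast
  have "bit_count b p i \<le> N" for i
  proof -
    have "bit_count b p i \<le> (\<Sum>j<i. if j < N then 1 else 0)"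
      unfolding bit_count_def using N by (intro sum_mono) auto
    also have "\<dots> = min i N" by (rule sum_indicator_less)
    finally show ?thesis by simp
  qed
  then show ?thesis by blast
qed

lemma baire_embed_limit_seq_less:
  assumes "finite {n. p (2 * n) = b}" and "infinite {n. p (2 * n) = b'}"
  shows "baire_embed (limit_seq b p L) < baire_embed (limit_seq b' p L)"
proof -
  have exK: "\<exists>k. \<not> (\<exists>i. k < bit_count b p i)"
    using bit_count_bounded[OF assms(1)] by (auto simp: not_less)
  define K where "K = (LEAST k. \<not> (\<exists>i. k < bit_count b p i))"
  have K: "\<not> (\<exists>i. K < bit_count b p i)" unfolding K_def by (rule LeastI_ex[OF exK])
  have below_K: "\<exists>i. k < bit_count b p i" if "k < K" for k
    using not_less_Least[of k "\<lambda>k. \<not> (\<exists>i. k < bit_count b p i)"] that unfolding K_def by blast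
  have "\<forall>m<3 * K. limit_seq b p L m = limit_seq b' p L m"
  proof (intro allI impI)
    fix m assume m: "m < 3 * K"
    show "limit_seq b p L m = limit_seq b' p L m"
    proof (cases "m mod 3 = 0")
      case True
      then have "m div 3 < K" using m by linarith
      then show ?thesis using True below_K bit_count_unbounded[OF assms(2)]
        by (simp add: limit_seq_def)
    qed (simp add: limit_seq_def)
  qed
  moreover have "limit_seq b p L (3 * K) < limit_seq b' p L (3 * K)"
    using K bit_count_unbounded[OF assms(2), of K] by (simp add: limit_seq_def mod_div_3)
  ultimately show ?thesis by (rule baire_embed_lex_less)
qed


lemma int_decode_double: "int_decode (2 * n) = int n"
  by (simp add: int_decode_def sum_decode_def)

lemma int_decode_double_minus_1:
  assumes "1 \<le> n"
  shows "int_decode (2 * n - 1) = - int n"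
proof -
  obtain k where k: "n = Suc k" using assms by (metis Suc_le_D One_nat_def)
  then have "2 * n - 1 = Suc (2 * k)" by simp
  then show ?thesis using k by (simp add: int_decode_def sum_decode_def)
qed

lemma nuQ_double:
  "1 \<le> d \<Longrightarrow> nuQ (prod_encode (2 * n, d - 1)) = real n / real d"
  by (simp add: nuQ_def int_decode_double)

lemma nuQ_double_minus_1:
  "1 \<le> n \<Longrightarrow> 1 \<le> d \<Longrightarrow> nuQ (prod_encode (2 * n - 1, d - 1)) = - real n / real d"
  using int_decode_double_minus_1[of n] by (simp add: nuQ_def del: One_nat_def)

lemma nuQ_0: "nuQ 0 = 0"
  by (simp add: nuQ_def prod_decode_0 int_decode_def sum_decode_def)

lemma dyadic_approx_unique:
  fixes x x' :: real
  assumes "\<forall>i. \<bar>q i - x\<bar> \<le> (1/2) ^ i" "\<forall>i. \<bar>q i - x'\<bar> \<le> (1/2) ^ i"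
  shows "x = x'"
proof (rule ccontr)
  assume "x \<noteq> x'"
  then obtain i where i: "(1/2::real) ^ i < \<bar>x - x'\<bar> / 2"
    using real_arch_pow_inv[of "\<bar>x - x'\<bar> / 2" "1/2"] by auto
  have "\<bar>x - x'\<bar> \<le> \<bar>q i - x\<bar> + \<bar>q i - x'\<bar>" by linarith
  also have "\<dots> \<le> 2 * (1/2) ^ i" using assms by (smt (verit))
  finally show False using i by simp
qed

lemma delta_real_SomeD:
  assumes "delta_real q = Some y"
  shows "\<bar>nuQ (q i) - y\<bar> \<le> (1/2) ^ i"
proof -
  have ex: "\<exists>x. \<forall>i. \<bar>nuQ (q i) - x\<bar> \<le> (1/2) ^ i"
    using assms unfolding delta_real_def by (metis option.distinct(1))
  have "delta_real q = Some (THE x. \<forall>i. \<bar>nuQ (q i) - x\<bar> \<le> (1/2) ^ i)"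
    unfolding delta_real_def by (rule if_P[OF ex])
  then have y: "y = (THE x. \<forall>i. \<bar>nuQ (q i) - x\<bar> \<le> (1/2) ^ i)" using assms by simp
  have "\<exists>!x. \<forall>i. \<bar>nuQ (q i) - x\<bar> \<le> (1/2) ^ i"
    using ex dyadic_approx_unique[of "\<lambda>i. nuQ (q i)"] by (intro ex_ex1I) auto
  then show ?thesis unfolding y by (rule theI'[THEN spec])
qed

lemma delta_real_zero: "delta_real (\<lambda>n. 0) = Some 0"
proof -
  have h: "\<forall>i. \<bar>nuQ 0 - 0\<bar> \<le> (1/2::real) ^ i" by (simp add: nuQ_0)
  then have "(THE x. \<forall>i. \<bar>nuQ 0 - x\<bar> \<le> (1/2::real) ^ i) = 0"
    using dyadic_approx_unique[of "\<lambda>_. nuQ 0"] by (intro the_equality) auto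
  moreover have "\<exists>x. \<forall>i. \<bar>nuQ 0 - x\<bar> \<le> (1/2::real) ^ i" using h by blast
  ultimately show ?thesis unfolding delta_real_def by simp
qed

lemma UN_intervals_approaching:
  fixes a b :: "nat \<Rightarrow> real"
  assumes "\<And>n. 0 \<le> a n" "\<And>n. 0 \<le> b n" "\<And>n. a n \<le> \<alpha>" "\<And>n. b n \<le> \<beta>"
    and "\<And>e. 0 < e \<Longrightarrow> \<exists>n. \<alpha> - e < a n" "\<And>e. 0 < e \<Longrightarrow> \<exists>n. \<beta> - e < b n"
  shows "(\<Union>n. {-(1 + a n) <..< 1 + b n}) = {-(1 + \<alpha>) <..< 1 + \<beta>}"
proof (intro set_eqI iffI)
  fix y assume "y \<in> (\<Union>n. {-(1 + a n) <..< 1 + b n})"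
  then obtain n where "-(1 + a n) < y" "y < 1 + b n" by auto
  then show "y \<in> {-(1 + \<alpha>) <..< 1 + \<beta>}" using assms(3,4)[of n] by auto
next
  fix y assume y: "y \<in> {-(1 + \<alpha>) <..< 1 + \<beta>}"
  show "y \<in> (\<Union>n. {-(1 + a n) <..< 1 + b n})"
  proof (cases "0 \<le> y")
    case True
    obtain n where "\<beta> - (1 + \<beta> - y) < b n" using assms(6)[of "1 + \<beta> - y"] y by auto
    then have "y \<in> {-(1 + a n) <..< 1 + b n}" using True assms(1)[of n] by auto
    then show ?thesis by blast
  next
    case False
    obtain n where "\<alpha> - (1 + \<alpha> + y) < a n" using assms(5)[of "1 + \<alpha> + y"] y by auto
    then have "y \<in> {-(1 + a n) <..< 1 + b n}" using False assms(2)[of n] by auto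
    then show ?thesis by blast
  qed
qed

definition gap_set :: "real \<Rightarrow> real \<Rightarrow> real set" where
  "gap_set a b = {y. y \<le> -a \<or> b \<le> y}"

lemma ProjR_gap_set:
  assumes "0 < a" "0 < b"
  shows "ProjR (0, gap_set a b) = {y. (y = -a \<and> a \<le> b) \<or> (y = b \<and> b \<le> a)}"
proof -
  have "gap_set a b = {..-a} \<union> {b..}" unfolding gap_set_def by auto
  then have closed: "closed (gap_set a b)" by (simp add: closed_Un)
  have nonempty: "gap_set a b \<noteq> {}" unfolding gap_set_def by auto
  have "infdist 0 (gap_set a b) = min a b"
  proof (rule antisym)
    have "infdist 0 (gap_set a b) \<le> dist 0 (-a)" "infdist 0 (gap_set a b) \<le> dist 0 b"
      by (rule infdist_le, simp add: gap_set_def)+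
    then show "infdist 0 (gap_set a b) \<le> min a b" using assms by (simp add: dist_real_def)
  next
    have "\<forall>y\<in>gap_set a b. min a b \<le> dist 0 y"
      unfolding gap_set_def dist_real_def using assms by auto
    then show "min a b \<le> infdist 0 (gap_set a b)"
      unfolding infdist_notempty[OF nonempty] using nonempty by (intro cINF_greatest) auto
  qed
  then have "ProjR (0, gap_set a b) = {y \<in> gap_set a b. \<bar>y\<bar> = min a b}"
    using closed nonempty by (simp add: ProjR_def)
  also have "\<dots> = {y. (y = -a \<and> a \<le> b) \<or> (y = b \<and> b \<le> a)}"
    using assms unfolding gap_set_def by (auto simp: min_def abs_if)
  finally show ?thesis .
qed


section \<open>The preprocessing machine\<close>

lemma digit_bounded_search: "digit t j = (if \<exists>n<Suc j. j = block_start t n + t n then 1 else 2)"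
proof -
  have "(\<exists>n<Suc j. j = block_start t n + t n) \<longleftrightarrow> (\<exists>n. j = block_start t n + t n)"
    using le_block_start[of _ t] by (metis le_add1 le_imp_less_Suc order.trans)
  then show ?thesis by (simp add: digit_def)
qed

lemma recursive_fun_block_start:
  assumes "recursive_fun (\<lambda>w. t (pfst w) (psnd w))" "recursive_fun m"
  shows "recursive_fun (\<lambda>x. block_start (t x) (m x))"
  unfolding block_start_def by (intro recursive_fun_sum recursive_fun_Suc assms)

lemma recursive_fun_digit_prefix:
  assumes t: "recursive_fun (\<lambda>w. t (pfst w) (psnd w))" and J: "recursive_fun J"
  shows "recursive_fun (\<lambda>x. digit_prefix (t x) (J x))"
proof -
  have digit: "recursive_fun (\<lambda>w. digit (t (pfst w)) (psnd w))"
    unfolding digit_bounded_search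
    by (intro recursive_intros recursive_fun_block_start recursive_fun_comp2[OF t])
  have "natrec (\<lambda>x. 0) (\<lambda>x j acc. 4 * acc + digit (t x) j) x n = digit_prefix (t x) n" for x n
    by (induction n) simp_all
  moreover have "recursive_fun (\<lambda>x. natrec (\<lambda>x. 0) (\<lambda>x j acc. 4 * acc + digit (t x) j) x (J x))"
    by (rule recursive_fun_natrec[OF recursive_fun_const _ J])
      (intro recursive_fun_add recursive_fun_mult recursive_fun_const recursive_proj
        recursive_fun_comp2[OF digit] recursive_fun_pfst)
  ultimately show ?thesis by simp
qed

definition approx_numer :: "baire \<Rightarrow> nat \<Rightarrow> nat" where
  "approx_numer t i = 4 ^ block_start t i + digit_prefix t (block_start t i)"

lemma approx_numer_ratio:
  "real (approx_numer t i) / real (4 ^ block_start t i) = 1 + baire_embed_approx t i"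
  unfolding approx_numer_def baire_embed_approx_def by (simp add: field_simps)

definition interval_code :: "baire \<Rightarrow> nat \<Rightarrow> nat" where
  "interval_code p i = prod_encode
     (prod_encode (2 * approx_numer (stage_seq 1 p i) i - 1,
        4 ^ block_start (stage_seq 1 p i) i - 1),
      prod_encode (2 * approx_numer (stage_seq 0 p i) i,
        4 ^ block_start (stage_seq 0 p i) i - 1))"

lemma interval_code_interval:
  "(case prod_decode (interval_code p n) of (a, b) \<Rightarrow> {nuQ a <..< nuQ b})
     = {-(1 + baire_embed_approx (stage_seq 1 p n) n) <..<
         1 + baire_embed_approx (stage_seq 0 p n) n}"
proof -
  have d: "1 \<le> (4::nat) ^ block_start t i" for t i by simp
  have e: "1 \<le> approx_numer t i" for t i unfolding approx_numer_def using d[of t i] by linarith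
  have "nuQ (prod_encode
      (2 * approx_numer (stage_seq 1 p n) n - 1, 4 ^ block_start (stage_seq 1 p n) n - 1))
      = -(1 + baire_embed_approx (stage_seq 1 p n) n)"
    using nuQ_double_minus_1[OF e d] approx_numer_ratio by (simp add: minus_divide_left[symmetric])
  moreover have "nuQ (prod_encode
      (2 * approx_numer (stage_seq 0 p n) n, 4 ^ block_start (stage_seq 0 p n) n - 1))
      = 1 + baire_embed_approx (stage_seq 0 p n) n"
    using nuQ_double[OF d] approx_numer_ratio by simp
  ultimately show ?thesis unfolding interval_code_def by simp
qed

definition interval_code_use :: "nat \<Rightarrow> nat" where
  "interval_code_use i = 2 * prod_encode (i, i) + 2"

lemma prod_encode_mono: "a \<le> c \<Longrightarrow> b \<le> d \<Longrightarrow> prod_encode (a, b) \<le> prod_encode (c, d)"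
proof -
  assume "a \<le> c" "b \<le> d"
  moreover have "triangle n \<le> triangle n'" if "n \<le> n'" for n n'
    using that by (induction n' rule: dec_induct) auto
  ultimately show ?thesis unfolding prod_encode_def by (simp add: add_mono)
qed

lemma stage_seq_cong:
  assumes pp': "\<forall>j<interval_code_use i. p j = p' j" and m: "m < i"
  shows "stage_seq b p i m = stage_seq b p' i m"
proof -
  have "2 * j < interval_code_use i" if "j < i" for j
    using le_prod_encode_1[of i i] that unfolding interval_code_use_def by linarith
  then have count: "bit_count b p i = bit_count b p' i"
    unfolding bit_count_def using pp' by (intro sum.cong) auto
  have entry: "seq_entry p j l = seq_entry p' j l" if "j \<le> i" "l \<le> i" for j l
    using prod_encode_mono[OF that] pp' unfolding seq_entry_def interval_code_use_def by simp
  have "seq_entry p (Suc j) l = seq_entry p' (Suc j) l \<and> seq_entry p j l = seq_entry p' j l"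
    if "j < i" "l < Suc (m div 3)" for j l
    using entry[of "Suc j" l] entry[of j l] that m by simp
  then have "changes_before p i (m div 3) = changes_before p' i (m div 3)"
    unfolding changes_before_def by (intro sum.cong refl) auto
  then show ?thesis unfolding stage_seq_def using count entry[of i "m div 3"] m by simp
qed

lemma interval_code_cong:
  assumes "\<forall>j<interval_code_use i. p j = p' j"
  shows "interval_code p i = interval_code p' i"
proof -
  have agree: "\<forall>k<i. stage_seq b p i k = stage_seq b p' i k" for b
    using stage_seq_cong[OF assms] by blast
  then have start: "block_start (stage_seq b p i) i = block_start (stage_seq b p' i) i" for b
    using block_start_cong by blast
  have "\<forall>j<block_start (stage_seq b p i) i. digit (stage_seq b p i) j = digit (stage_seq b p' i) j"
    for b
    using digit_cong[OF agree] start by auto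
  then have "digit_prefix (stage_seq b p i) (block_start (stage_seq b p i) i)
      = digit_prefix (stage_seq b p' i) (block_start (stage_seq b p' i) i)" for b
    using start digit_prefix_cong by metis
  then show ?thesis unfolding interval_code_def approx_numer_def start by simp
qed

definition pre_code :: "nat \<Rightarrow> nat" where
  "pre_code w = (if pfst w mod 2 = 0 then 1
     else if interval_code_use (pfst w div 2) \<le> code_length (psnd w)
     then Suc (interval_code (code_nth (psnd w)) (pfst w div 2)) else 0)"

definition pre_name :: "baire \<Rightarrow> baire" where
  "pre_name p m = (if m mod 2 = 0 then 0 else interval_code p (m div 2))"

lemma recursive_fun_pre_code: "recursive_fun pre_code"
  unfolding pre_code_def interval_code_def approx_numer_def stage_seq_def bit_count_def
    changes_before_def seq_entry_def interval_code_use_def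
  by (intro recursive_intros recursive_fun_digit_prefix recursive_fun_block_start)

lemma prefix_machine_pre_code: "prefix_machine pre_code p = Some (pre_name p)"
proof (rule prefix_machine_eqI)
  show "\<exists>k. query pre_code p m k \<noteq> 0" for m
    by (intro exI[of _ "interval_code_use (m div 2)"])
      (simp add: pre_code_def code_length_prefix_code)
  fix m k assume nz: "query pre_code p m k \<noteq> 0"
  show "query pre_code p m k = Suc (pre_name p m)"
  proof (cases "m mod 2 = 0")
    case True
    then show ?thesis by (simp add: pre_code_def pre_name_def)
  next
    case False
    then have k: "interval_code_use (m div 2) \<le> k"
      using nz by (simp add: pre_code_def code_length_prefix_code split: if_splits)
    then have "\<forall>j<interval_code_use (m div 2). code_nth (prefix_code p k) j = p j"
      using code_nth_prefix_code by auto
    then have "interval_code (code_nth (prefix_code p k)) (m div 2) = interval_code p (m div 2)"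
      by (rule interval_code_cong)
    then show ?thesis using False k by (simp add: pre_code_def pre_name_def code_length_prefix_code)
  qed
qed

lemma rep_prod_eq_Some_iff:
  "rep_prod d1 d2 r = Some (a, b) \<longleftrightarrow> d1 (\<lambda>n. r (2 * n)) = Some a \<and> d2 (\<lambda>n. r (2 * n + 1)) = Some b"
  by (auto simp: rep_prod_def split: option.splits)

definition input_set :: "baire \<Rightarrow> baire \<Rightarrow> real set" where
  "input_set p L = gap_set (1 + baire_embed (limit_seq 1 p L)) (1 + baire_embed (limit_seq 0 p L))"

lemma pre_name_input_set:
  assumes "\<And>k. eventually (\<lambda>i. seq_entry p i k = L k) sequentially"
  shows "rep_prod delta_real rep_closed_neg (pre_name p) = Some (0, input_set p L)"
proof -
  have "pre_name p (2 * n + 1) = interval_code p n" for n by (simp add: pre_name_def)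
  then have "(\<Union>n. case prod_decode (pre_name p (2 * n + 1)) of (a, b) \<Rightarrow> {nuQ a <..< nuQ b})
      = (\<Union>n. {-(1 + baire_embed_approx (stage_seq 1 p n) n) <..<
          1 + baire_embed_approx (stage_seq 0 p n) n})"
    by (simp only: interval_code_interval)
  also have "\<dots> = {-(1 + baire_embed (limit_seq 1 p L)) <..< 1 + baire_embed (limit_seq 0 p L)}"
    by (rule UN_intervals_approaching[OF baire_embed_approx_nonneg baire_embed_approx_nonneg
          approx_stage_le[OF assms] approx_stage_le[OF assms]
          approx_stage_approaches[OF assms] approx_stage_approaches[OF assms]])
  finally have "(\<Union>n. case prod_decode (pre_name p (2 * n + 1)) of (a, b) \<Rightarrow> {nuQ a <..< nuQ b})
      = {-(1 + baire_embed (limit_seq 1 p L)) <..< 1 + baire_embed (limit_seq 0 p L)}" .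
  then have "rep_closed_neg (\<lambda>n. pre_name p (2 * n + 1)) = Some (input_set p L)"
    unfolding rep_closed_neg_def input_set_def gap_set_def by auto
  moreover have "(\<lambda>n. pre_name p (2 * n)) = (\<lambda>n. 0)" by (simp add: pre_name_def)
  ultimately show ?thesis unfolding rep_prod_eq_Some_iff using delta_real_zero by simp
qed


section \<open>The postprocessing machine\<close>

definition code_digit :: "nat \<Rightarrow> nat \<Rightarrow> nat \<Rightarrow> nat" where
  "code_digit N J j = (N div 4 ^ (J - Suc j)) mod 4"

definition code_ends_before :: "nat \<Rightarrow> nat \<Rightarrow> nat \<Rightarrow> nat" where
  "code_ends_before N J j = (\<Sum>i<j. if code_digit N J i = 1 then 1 else 0)"

definition code_block_length :: "nat \<Rightarrow> nat \<Rightarrow> nat \<Rightarrow> nat" where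
  "code_block_length N J r
    = (\<Sum>j<J. if code_ends_before N J j = r \<and> code_digit N J j = 2 then 1 else 0)"

lemma code_digit_digit_prefix: "j < J \<Longrightarrow> code_digit (digit_prefix t J) J j = digit t j"
  unfolding code_digit_def by (rule digit_prefix_digit)

lemma code_ends_before_digit_prefix:
  "j \<le> J \<Longrightarrow> code_ends_before (digit_prefix t J) J j = ends_before t j"
  unfolding code_ends_before_def ends_before_def
    by (intro sum.cong refl) (simp add: code_digit_digit_prefix)

lemma code_block_length_digit_prefix:
  assumes "Suc r \<le> ends_before t J"
  shows "code_block_length (digit_prefix t J) J r = t r"
proof -
  have "code_block_length (digit_prefix t J) J r
      = (\<Sum>j<J. if ends_before t j = r \<and> digit t j = 2 then 1 else 0)"
    unfolding code_block_length_def
    by (intro sum.cong refl) (simp add: code_ends_before_digit_prefix code_digit_digit_prefix)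
  then show ?thesis using block_length_from_digits[OF block_end_before[OF assms]] by simp
qed

definition rat_abs_numer :: "nat \<Rightarrow> nat" where
  "rat_abs_numer q = nat \<bar>int_decode (pfst q)\<bar>"

lemma abs_nuQ: "\<bar>nuQ q\<bar> = real (rat_abs_numer q) / real (Suc (psnd q))"
  by (simp add: nuQ_def rat_abs_numer_def case_prod_beta abs_divide)

lemma rat_abs_numer_eq:
  "rat_abs_numer q = (if pfst q mod 2 = 0 then pfst q div 2 else pfst q div 2 + 1)"
  by (auto simp: rat_abs_numer_def int_decode_def sum_decode_def even_iff_mod_2_eq_zero)

lemma nuQ_pos_iff: "0 < nuQ q \<longleftrightarrow> pfst q mod 2 = 0 \<and> 0 < pfst q"
proof -
  have "0 < nuQ q \<longleftrightarrow> 0 < int_decode (pfst q)"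
    by (simp add: nuQ_def case_prod_beta zero_less_divide_iff)
  also have "\<dots> \<longleftrightarrow> pfst q mod 2 = 0 \<and> 0 < pfst q"
    by (auto simp: int_decode_def sum_decode_def even_iff_mod_2_eq_zero)
  finally show ?thesis .
qed

definition digits_from_rat :: "nat \<Rightarrow> nat \<Rightarrow> nat" where
  "digits_from_rat q J = (4 ^ J * (rat_abs_numer q - Suc (psnd q))) div Suc (psnd q)"

lemma digits_from_rat_eq:
  fixes y :: real
  assumes y: "\<bar>y\<bar> = 1 + baire_embed t" and approx: "\<bar>nuQ q - y\<bar> \<le> (1/2) ^ (2 * J + 2)"
  shows "digits_from_rat q J = digit_prefix t J"
proof -
  define A where "A = rat_abs_numer q"
  define B where "B = Suc (psnd q)"
  have B0: "0 < B" unfolding B_def by simp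
  have av: "\<bar>nuQ q\<bar> = real A / real B" unfolding A_def B_def by (rule abs_nuQ)
  have "(1/2::real) ^ (2 * J + 2) = 1 / (4 * 4 ^ J)"
    by (simp add: power_add power_mult power_divide)
  then have close: "\<bar>(\<bar>nuQ q\<bar> - 1) - baire_embed t\<bar> \<le> 1 / (4 * 4 ^ J)"
    using approx y abs_triangle_ineq3[of "nuQ q" y] by simp
  moreover have "1 / (4 * 4 ^ J) \<le> (1/4::real)" by (simp add: field_simps)
  ultimately have "1 \<le> \<bar>nuQ q\<bar>" using baire_embed_bounds(1)[of t] by linarith
  then have "B \<le> A" using av B0 by (simp add: field_simps)
  then have "\<bar>nuQ q\<bar> - 1 = real (A - B) / real B" using av B0 by (simp add: field_simps of_nat_diff)
  then have "\<lfloor>4 ^ J * (real (A - B) / real B)\<rfloor> = int (digit_prefix t J)"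
    using floor_digit_prefix[OF close] by simp
  moreover have "4 ^ J * (real (A - B) / real B) = real (4 ^ J * (A - B)) / real B" by simp
  ultimately have "int ((4 ^ J * (A - B)) div B) = int (digit_prefix t J)"
    by (simp only: floor_divide_of_nat_eq)
  then show ?thesis unfolding digits_from_rat_def A_def B_def by simp
qed

definition prefix_depth :: "nat \<Rightarrow> nat" where
  "prefix_depth c = (code_length c - 3) div 2"

definition prefix_digits :: "nat \<Rightarrow> nat" where
  "prefix_digits c = digits_from_rat (code_nth c (code_length c - 1)) (prefix_depth c)"

definition sign_bit :: "nat \<Rightarrow> nat" where
  "sign_bit c = (if pfst (code_nth c 1) mod 2 = 0 \<and> 0 < pfst (code_nth c 1) then 1 else 0)"

text \<open>Output 0 is the sign of the approximation q 1. For odd outputs, the last rational q (k - 1)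
  of a prefix of length k is within 2^-(2J+2) of \<plusminus>(1 + E t), where J = (k - 3) div 2,
  which determines the first J base-4 digits of E t.\<close>

definition post_code :: "nat \<Rightarrow> nat" where
  "post_code w = (let m = pfst w; c = psnd w; r = 3 * (m div 2) + 2 in
     if m = 0 then (if 2 \<le> code_length c then Suc (sign_bit c) else 0)
     else if m mod 2 = 0 then 1
     else if 3 \<le> code_length c \<and>
       Suc r \<le> code_ends_before (prefix_digits c) (prefix_depth c) (prefix_depth c)
     then Suc (code_block_length (prefix_digits c) (prefix_depth c) r)
     else 0)"

definition post_name :: "real \<Rightarrow> baire \<Rightarrow> baire" where
  "post_name y t m = (if m = 0 then (if 0 < y then 1 else 0)
     else if m mod 2 = 0 then 0 else t (3 * (m div 2) + 2))"

lemma recursive_fun_post_code: "recursive_fun post_code"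
  unfolding post_code_def Let_def sign_bit_def prefix_digits_def prefix_depth_def digits_from_rat_def
    rat_abs_numer_eq code_block_length_def code_ends_before_def code_digit_def
  by (intro recursive_intros)

context
  fixes q :: baire and y :: real and t :: baire
  assumes q_approx: "\<And>i. \<bar>nuQ (q i) - y\<bar> \<le> (1/2) ^ i"
    and abs_y: "\<bar>y\<bar> = 1 + baire_embed t"
begin

lemma sign_bit_prefix_code:
  assumes "2 \<le> k"
  shows "sign_bit (prefix_code q k) = (if 0 < y then 1 else 0)"
proof -
  have "\<bar>nuQ (q 1) - y\<bar> \<le> 1/2" using q_approx[of 1] by simp
  then have "0 < nuQ (q 1) \<longleftrightarrow> 0 < y"
    using abs_y baire_embed_bounds(1)[of t] by (auto simp: abs_if split: if_splits)
  then show ?thesis using assms by (simp add: sign_bit_def nuQ_pos_iff code_nth_prefix_code)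
qed

lemma prefix_digits_prefix_code:
  assumes "3 \<le> k"
  shows "prefix_digits (prefix_code q k) = digit_prefix t ((k - 3) div 2)"
proof -
  have "(1/2::real) ^ (k - 1) \<le> (1/2) ^ (2 * ((k - 3) div 2) + 2)"
    using assms by (intro power_decreasing) auto
  then have "\<bar>nuQ (q (k - 1)) - y\<bar> \<le> (1/2) ^ (2 * ((k - 3) div 2) + 2)"
    using q_approx[of "k - 1"] by linarith
  then show ?thesis using assms digits_from_rat_eq[OF abs_y]
    by (simp add: prefix_digits_def prefix_depth_def code_length_prefix_code code_nth_prefix_code)
qed

lemma post_code_odd:
  assumes "odd m" "3 \<le> k"
  shows "query post_code q m k
    = (if Suc (3 * (m div 2) + 2) \<le> ends_before t ((k - 3) div 2)
       then Suc (t (3 * (m div 2) + 2)) else 0)"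
proof -
  have "m \<noteq> 0" "m mod 2 \<noteq> 0" using assms(1) odd_pos[of m] by (auto simp: odd_iff_mod_2_eq_one)
  moreover have "code_ends_before (digit_prefix t J) J J = ends_before t J" for J
    by (simp add: code_ends_before_digit_prefix)
  ultimately show ?thesis using assms(2) code_block_length_digit_prefix
    by (simp add: post_code_def Let_def prefix_digits_prefix_code prefix_depth_def code_length_prefix_code)
qed

lemma prefix_machine_post_code: "prefix_machine post_code q = Some (post_name y t)"
proof (rule prefix_machine_eqI)
  fix m
  show "\<exists>k. query post_code q m k \<noteq> 0"
  proof (cases "odd m")
    case True
    define J where "J = block_start t (Suc (3 * (m div 2) + 2))"
    have "(2 * J + 3 - 3) div 2 = J" by simp
    then have "query post_code q m (2 * J + 3) \<noteq> 0"
      using post_code_odd[OF True] ends_before_ge[of t _ J] unfolding J_def by simp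
    then show ?thesis by blast
  next
    case False
    then show ?thesis
      by (intro exI[of _ 2]) (auto simp: post_code_def Let_def code_length_prefix_code)
  qed
next
  fix m k
  assume nonzero: "query post_code q m k \<noteq> 0"
  show "query post_code q m k = Suc (post_name y t m)"
  proof (cases "odd m")
    case True
    then have "3 \<le> k" using nonzero
      by (auto simp: post_code_def Let_def code_length_prefix_code split: if_splits)
    then show ?thesis using nonzero True post_code_odd
      by (auto simp: post_name_def split: if_splits)
  next
    case False
    then show ?thesis using nonzero sign_bit_prefix_code
      by (auto simp: post_code_def Let_def post_name_def code_length_prefix_code split: if_splits)
  qed
qed

end


lemma eventually_coordinate_eq_lim:
  fixes xs :: "nat \<Rightarrow> baire"
  assumes "xs \<longlonglongrightarrow> L"
  shows "eventually (\<lambda>i. xs i k = L k) sequentially"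
proof -
  have "continuous_on UNIV (\<lambda>f::baire. f k)"
    by (rule continuous_on_product_then_coordinatewise) (rule continuous_on_id)
  then have "(\<lambda>i. xs i k) \<longlonglongrightarrow> L k"
    using assms by (rule continuous_on_tendsto_compose) auto
  then show ?thesis by (simp add: tendsto_discrete)
qed

lemma input_name_SomeD:
  assumes "rep_prod rep_cantor rep_baire_seq p = Some (x, xs)"
  shows "\<forall>n. p (2 * n) \<le> 1" "x = (\<lambda>n. p (2 * n) = 1)" "xs = seq_entry p"
  using assms by (auto simp: rep_prod_eq_Some_iff rep_cantor_def rep_baire_seq_def seq_entry_def
      fun_eq_iff split: if_splits)

lemma infinite_other_bit:
  fixes p :: baire
  assumes "\<forall>n. p (2 * n) \<le> 1" "b \<le> 1" "finite {n. p (2 * n) = b}"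
  shows "infinite {n. p (2 * n) = 1 - b}"
proof
  assume "finite {n. p (2 * n) = 1 - b}"
  moreover have "p (2 * n) = b \<or> p (2 * n) = 1 - b" for n
    using assms(1,2) by (metis One_nat_def diff_Suc_1 diff_zero le_SucE le_zero_eq)
  then have "UNIV = {n. p (2 * n) = b} \<union> {n. p (2 * n) = 1 - b}" by blast
  ultimately show False using assms(3) infinite_UNIV_nat by (metis finite_Un)
qed

lemma ProjR_input_set: "ProjR (0, input_set p L) =
    {y. (y = -(1 + baire_embed (limit_seq 1 p L))
          \<and> baire_embed (limit_seq 1 p L) \<le> baire_embed (limit_seq 0 p L))
      \<or> (y = 1 + baire_embed (limit_seq 0 p L)
          \<and> baire_embed (limit_seq 0 p L) \<le> baire_embed (limit_seq 1 p L))}"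
  unfolding input_set_def ProjR_gap_set[OF one_plus_baire_embed_pos one_plus_baire_embed_pos]
    by simp

lemma projection_sign_in_BWT2:
  assumes bits: "\<forall>n. p (2 * n) \<le> 1"
    and y: "y \<in> ProjR (0, input_set p L)"
  shows "(0 < y) \<in> BWT2 (\<lambda>n. p (2 * n) = 1)"
proof -
  have less: "baire_embed (limit_seq b p L) < baire_embed (limit_seq (1 - b) p L)"
    if "b \<le> 1" "finite {n. p (2 * n) = b}" for b
    using baire_embed_limit_seq_less[OF that(2) infinite_other_bit[OF bits that]] .
  show ?thesis
  proof (cases "0 < y")
    case True
    then have "baire_embed (limit_seq 0 p L) \<le> baire_embed (limit_seq 1 p L)"
      using y one_plus_baire_embed_pos[of "limit_seq 1 p L"] unfolding ProjR_input_set by auto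
    then have "infinite {n. p (2 * n) = 1}" using less[of 1] by force
    then show ?thesis using True by (simp add: BWT2_def)
  next
    case False
    then have "baire_embed (limit_seq 1 p L) \<le> baire_embed (limit_seq 0 p L)"
      using y one_plus_baire_embed_pos[of "limit_seq 0 p L"] unfolding ProjR_input_set by auto
    then have "infinite {n. p (2 * n) = 0}" using less[of 0] by force
    moreover have "{n. p (2 * n) \<noteq> 1} = {n. p (2 * n) = 0}" using bits by (auto simp: le_Suc_eq)
    ultimately show ?thesis using False by (simp add: BWT2_def)
  qed
qed

lemma ProjR_input_set_nonempty: "ProjR (0, input_set p L) \<noteq> {}"
  unfolding ProjR_input_set
    by (cases "baire_embed (limit_seq 1 p L) \<le> baire_embed (limit_seq 0 p L)") auto

lemma projection_abs:
  assumes "y \<in> ProjR (0, input_set p L)"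
  obtains b where "\<bar>y\<bar> = 1 + baire_embed (limit_seq b p L)"
proof -
  have "y = -(1 + baire_embed (limit_seq 1 p L)) \<or> y = 1 + baire_embed (limit_seq 0 p L)"
    using assms unfolding ProjR_input_set by auto
  then show ?thesis using one_plus_baire_embed_pos that by (metis abs_minus_cancel abs_of_pos)
qed

lemma post_name_limit_seq:
  "rep_prod rep_bool rep_baire (post_name y (limit_seq b p L)) = Some (0 < y, L)"
proof -
  have "post_name y (limit_seq b p L) (2 * n + 1) = L n" for n
    using limit_seq_entry by (simp add: post_name_def)
  then show ?thesis by (simp add: rep_prod_eq_Some_iff rep_bool_def rep_baire_def post_name_def)
qed

lemma realizes_pre_post:
  assumes G: "realizes (rep_prod delta_real rep_closed_neg) delta_real ProjR G"
  shows "realizes (rep_prod rep_cantor rep_baire_seq) (rep_prod rep_bool rep_baire)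
    (prob_prod BWT2 lim_baire)
    (\<lambda>p. Option.bind (prefix_machine pre_code p) (\<lambda>r. Option.bind (G r) (prefix_machine post_code)))"
  unfolding realizes_def
proof (intro allI impI, elim conjE)
  fix p and xxs :: "(nat \<Rightarrow> bool) \<times> (nat \<Rightarrow> baire)"
  assume p: "rep_prod rep_cantor rep_baire_seq p = Some xxs" and "prob_prod BWT2 lim_baire xxs \<noteq> {}"
  moreover obtain x xs where xxs: "xxs = (x, xs)" by (cases xxs)
  ultimately obtain L where L: "xs \<longlonglongrightarrow> L" by (auto simp: prob_prod_def lim_baire_def)
  note input = input_name_SomeD[OF p[unfolded xxs]]
  have "\<And>k. eventually (\<lambda>i. seq_entry p i k = L k) sequentially"
    using eventually_coordinate_eq_lim[OF L] input(3) by simp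
  note name = pre_name_input_set[OF this]
  obtain q y where q: "G (pre_name p) = Some q" "delta_real q = Some y"
    and y: "y \<in> ProjR (0, input_set p L)"
    using G[unfolded realizes_def, rule_format, OF conjI[OF name ProjR_input_set_nonempty]] by blast
  obtain b where "\<bar>y\<bar> = 1 + baire_embed (limit_seq b p L)" using projection_abs[OF y] .
  then have "prefix_machine post_code q = Some (post_name y (limit_seq b p L))"
    using prefix_machine_post_code delta_real_SomeD[OF q(2)] by blast
  then have "Option.bind (prefix_machine pre_code p) (\<lambda>r. Option.bind (G r) (prefix_machine post_code))
      = Some (post_name y (limit_seq b p L))"
    using prefix_machine_pre_code q(1) by simp
  moreover have "(0 < y, L) \<in> prob_prod BWT2 lim_baire xxs"
    using projection_sign_in_BWT2[OF input(1) y] input(2) L xxs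
    by (simp add: prob_prod_def lim_baire_def)
  ultimately show "\<exists>h z. Option.bind (prefix_machine pre_code p) (\<lambda>r. Option.bind (G r) (prefix_machine post_code))
      = Some h \<and> rep_prod rep_bool rep_baire h = Some z \<and> z \<in> prob_prod BWT2 lim_baire xxs"
    using post_name_limit_seq by blast
qed

theorem lemma4p12:
  shows "sW_reducible (rep_prod rep_cantor rep_baire_seq) (rep_prod rep_bool rep_baire)
           (prob_prod BWT2 lim_baire)
           (rep_prod delta_real rep_closed_neg) delta_real ProjR"
  unfolding sW_reducible_def
  using computable_prefix_machine[OF recursive_fun_post_code]
    computable_prefix_machine[OF recursive_fun_pre_code] realizes_pre_post
  by blast

end
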